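(* Let $A\in\mathbb{R}^{n\times n}$ be symmetric with eigenvalues $\alpha_1\ge\cdots\ge\alpha_n$, $g\in\mathbb{R}^n$ nonzero, $\Delta>0$, and consider the TRS of minimizing $\frac12x^TAx+x^Tg$ subject to $\|x\|\le\Delta$, in the easy case. With the notation of the context, suppose $\|x_{opt}\|=\|x_k\|=\Delta$. Then $$\|(A+\lambda_kI)x_k+g\|\le2\min\{B_1,B_2\},$$ where $B_1=\|A_{opt}\|\sqrt{\Delta^2+\epsilon_k^2}\big(\frac{\sqrt\kappa-1}{\sqrt\kappa+1}\big)^k$ and $B_2=\beta_k\Delta\big(\frac{\sqrt{\kappa_k}-1}{\sqrt{\kappa_k}+1}\big)^{k-1}$.
   Context: All norms are Euclidean. $x_{opt}$ is a global minimizer of the TRS, $\lambda_{opt}\ge0$ its Lagrange multiplier ($(A+\lambda_{opt}I)x_{opt}=-g$, $\lambda_{opt}(\Delta-\|x_{opt}\|)=0$, $A+\lambda_{opt}I\succeq0$); easy case: $\lambda_{opt}>-\alpha_n$. $A_{opt}=A+\lambda_{opt}I$, $\kappa=(\alpha_1+\lambda_{opt})/(\alpha_n+\lambda_{opt})$. Lanczos on $A$ with starting vector $g$: $Q_k=[q_1,\ldots,q_k]$ orthonormal basis of $\mathcal{K}_k(A,g)=\mathrm{span}\{g,\ldots,A^{k-1}g\}$, $q_1=g/\|g\|$, $T_k=Q_k^TAQ_k$ tridiagonal, $AQ_k=Q_kT_k+\beta_kq_{k+1}e_k^T$. GLTR: $x_k=Q_kh_k$, $h_k$ minimizes $\frac12h^TT_kh+\|g\|h^Te_1$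 over $\|h\|\le\Delta$, multiplier $\lambda_k\ge0$ with $(T_k+\lambda_kI)h_k=-\|g\|e_1$, $\lambda_k(\Delta-\|h_k\|)=0$, $T_k+\lambda_kI\succ0$. $\kappa_k$ is the 2-condition number of $T_k+\lambda_kI$. $\epsilon_k=\|(I-Q_kQ_k^T)x_{opt}\|$. *)

theory Defs
  imports "HOL-Analysis.Analysis"
begin

definition eigvals :: "real^'n^'n \<Rightarrow> real set" where
  "eigvals A = {\<mu>. \<exists>v. v \<noteq> 0 \<and> A *v v = \<mu> *\<^sub>R v}"

definition trs_obj :: "real^'n^'n \<Rightarrow> real^'n \<Rightarrow> real^'n \<Rightarrow> real" where
  "trs_obj A g x = (1/2) * (x \<bullet> (A *v x)) + x \<bullet> g"

definition krylov :: "real^'n^'n \<Rightarrow> real^'n \<Rightarrow> nat \<Rightarrow> (real^'n) set" where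
  "krylov A g m = span {((\<lambda>x. A *v x) ^^ j) g | j. j < m}"

(* vectors in R^k represented as nat => real, components indexed 1..k *)
definition vnorm :: "nat \<Rightarrow> (nat \<Rightarrow> real) \<Rightarrow> real" where
  "vnorm k v = sqrt (\<Sum>i=1..k. (v i)^2)"

(* k x k matrices represented as nat => nat => real, entries indexed 1..k *)
definition mvec :: "nat \<Rightarrow> (nat \<Rightarrow> nat \<Rightarrow> real) \<Rightarrow> (nat \<Rightarrow> real) \<Rightarrow> (nat \<Rightarrow> real)" where
  "mvec k M v = (\<lambda>i. \<Sum>j=1..k. M i j * v j)"

definition cond2 :: "nat \<Rightarrow> (nat \<Rightarrow> nat \<Rightarrow> real) \<Rightarrow> real" where
  "cond2 k M = (SUP v\<in>{v. vnorm k v = 1}. vnorm k (mvec k M v))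
             / (INF v\<in>{v. vnorm k v = 1}. vnorm k (mvec k M v))"

definition gltr_obj :: "nat \<Rightarrow> (nat \<Rightarrow> nat \<Rightarrow> real) \<Rightarrow> real \<Rightarrow> (nat \<Rightarrow> real) \<Rightarrow> real" where
  "gltr_obj k T gn h = (1/2) * (\<Sum>i=1..k. \<Sum>j=1..k. h i * T i j * h j) + gn * h 1"

end

theory Submission
  imports Defs "HOL-Computational_Algebra.Polynomial"
begin

text \<open>
  The residual \<open>r = (A + \<lambda>\<^sub>k I) x\<^sub>k + g\<close> of the GLTR iterate equals \<open>\<beta>\<^sub>k h\<^sub>k q\<^sub>k\<^sub>+\<^sub>1\<close> and is orthogonal
  to the Krylov space \<open>K\<^sub>k\<close>. Both bounds come from a Chebyshev polynomial \<open>S\<close> with \<open>S(0) = 1\<close>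
  applied to a self-adjoint operator \<open>F\<close> with \<open>F x = -g\<close>: then \<open>x - S(F) x\<close> is a Krylov vector and
  \<open>|S(F) x| \<le> 2 \<rho>\<^sup>m |x|\<close>, where \<open>\<rho> = (\<surd>\<kappa> - 1)/(\<surd>\<kappa> + 1)\<close>.

  For \<open>B\<^sub>2\<close>, take for \<open>F\<close> the compression of \<open>A + \<lambda>\<^sub>k I\<close> to \<open>K\<^sub>k\<close> (the matrix \<open>T\<^sub>k + \<lambda>\<^sub>k I\<close> in the Lanczos
  basis), extended by its smallest eigenvalue off \<open>K\<^sub>k\<close>; it has condition number \<open>\<kappa>\<^sub>k\<close> and
  \<open>F x\<^sub>k = -g\<close>. With \<open>deg S = k - 1\<close> the Krylov vector lies in \<open>K\<^sub>k\<^sub>-\<^sub>1 \<bottom> q\<^sub>k\<close>, so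
  \<open>|h\<^sub>k| = |q\<^sub>k \<bullet> S(F) x\<^sub>k| \<le> 2 \<rho>\<^sub>k\<^sup>k\<^sup>-\<^sup>1 \<Delta>\<close>.

  For \<open>B\<^sub>1\<close>, take \<open>F = A\<^sub>o\<^sub>p\<^sub>t\<close> and \<open>x = x\<^sub>o\<^sub>p\<^sub>t\<close>: some \<open>w \<in> K\<^sub>k\<close> is within \<open>2 \<rho>\<^sup>k \<Delta>\<close> of \<open>x\<^sub>o\<^sub>p\<^sub>t\<close>, which yields a
  point \<open>z \<in> K\<^sub>k\<close> on the sphere with \<open>|z - x\<^sub>o\<^sub>p\<^sub>t| \<le> 2 \<rho>\<^sup>k (\<Delta>\<^sup>2 + \<epsilon>\<^sub>k\<^sup>2)\<^sup>1\<^sup>/\<^sup>2\<close>. On the sphere the objective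
  gap is half the \<open>A\<^sub>o\<^sub>p\<^sub>t\<close>-energy of the error, so optimality of \<open>x\<^sub>k\<close> in \<open>K\<^sub>k\<close> and
  \<open>|A\<^sub>o\<^sub>p\<^sub>t e|\<^sup>2 \<le> \<parallel>A\<^sub>o\<^sub>p\<^sub>t\<parallel> (e \<bullet> A\<^sub>o\<^sub>p\<^sub>t e)\<close> give \<open>|r| \<le> |A\<^sub>o\<^sub>p\<^sub>t (x\<^sub>k - x\<^sub>o\<^sub>p\<^sub>t)| \<le> \<parallel>A\<^sub>o\<^sub>p\<^sub>t\<parallel> |z - x\<^sub>o\<^sub>p\<^sub>t|\<close>.
\<close>

section \<open>Polynomials in a linear operator\<close>

definition poly_op :: "('a::real_vector \<Rightarrow> 'a) \<Rightarrow> real poly \<Rightarrow> 'a \<Rightarrow> 'a" where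
  "poly_op F p x = (\<Sum>i\<le>degree p. coeff p i *\<^sub>R (F ^^ i) x)"

lemma poly_op_eq_sum_atMost:
  "degree p \<le> N \<Longrightarrow> poly_op F p x = (\<Sum>i\<le>N. coeff p i *\<^sub>R (F ^^ i) x)"
  unfolding poly_op_def by (rule sum.mono_neutral_left) (auto simp: coeff_eq_0)

lemma poly_op_add: "poly_op F (p + q) x = poly_op F p x + poly_op F q x"
proof -
  let ?N = "max (degree p) (degree q)"
  have "degree (p + q) \<le> ?N" by (rule degree_add_le) auto
  then show ?thesis
    by (simp add: poly_op_eq_sum_atMost[of _ ?N] scaleR_add_left sum.distrib)
qed

lemma poly_op_smult: "poly_op F (smult a p) x = a *\<^sub>R poly_op F p x"
  by (simp add: poly_op_eq_sum_atMost[of "smult a p" "degree p"] poly_op_def scaleR_sum_right)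

lemma poly_op_const [simp]: "poly_op F [:c:] x = c *\<^sub>R x"
  by (simp add: poly_op_def)

lemma poly_op_0 [simp]: "poly_op F 0 x = 0"
  by (simp add: poly_op_def)

lemma poly_op_1 [simp]: "poly_op F 1 x = x"
  by (simp add: poly_op_def)

lemma linear_funpow:
  fixes F :: "'a::real_vector \<Rightarrow> 'a"
  shows "linear F \<Longrightarrow> linear (F ^^ i)"
proof (induction i)
  case (Suc i)
  then show ?case using linear_compose[of "F ^^ i" F] by (simp add: o_def)
qed (simp add: linear_id)

lemma linear_poly_op: "linear F \<Longrightarrow> linear (poly_op F p)"
  unfolding poly_op_def
  by (intro linear_compose_sum) (auto intro!: linear_compose_scale_right linear_funpow)

lemma poly_op_commute:
  assumes "linear F"
  shows "F (poly_op F p x) = poly_op F p (F x)"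
  using assms by (simp add: poly_op_def linear_sum linear_scale funpow_swap1)

lemma poly_op_pCons:
  assumes "linear F"
  shows "poly_op F (pCons a p) x = a *\<^sub>R x + F (poly_op F p x)"
proof -
  have "poly_op F (pCons a p) x = (\<Sum>i\<le>Suc (degree p). coeff (pCons a p) i *\<^sub>R (F ^^ i) x)"
    by (rule poly_op_eq_sum_atMost) (simp add: degree_pCons_le)
  also have "\<dots> = a *\<^sub>R x + (\<Sum>i\<le>degree p. coeff p i *\<^sub>R F ((F ^^ i) x))"
    by (subst sum.atMost_Suc_shift) simp
  also have "(\<Sum>i\<le>degree p. coeff p i *\<^sub>R F ((F ^^ i) x)) = F (poly_op F p x)"
    unfolding poly_op_def using assms by (simp add: linear_sum linear_scale)
  finally show ?thesis .
qed

lemma poly_op_pCons_1: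
  assumes "linear F"
  shows "poly_op F (pCons 1 p) x = x + poly_op F p (F x)"
  using assms by (simp add: poly_op_pCons poly_op_commute)

lemma poly_op_mult:
  assumes "linear F"
  shows "poly_op F (p * q) x = poly_op F p (poly_op F q x)"
proof (induction p)
  case (pCons a p)
  have "pCons a p * q = smult a q + pCons 0 (p * q)" by (simp add: mult_pCons_left)
  with pCons assms show ?case by (simp add: poly_op_add poly_op_smult poly_op_pCons)
qed simp

lemma poly_op_pcompose:
  assumes "linear F"
  shows "poly_op F (pcompose p q) x = poly_op (poly_op F q) p x"
proof (induction p arbitrary: x)
  case (pCons a p)
  have "linear (poly_op F q)" using assms by (rule linear_poly_op)
  with pCons assms show ?case
    by (simp add: pcompose_pCons poly_op_add poly_op_mult poly_op_pCons)
qed simp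

lemma funpow_self_adjoint:
  fixes F :: "'a::real_inner \<Rightarrow> 'a"
  assumes "\<And>x y. F x \<bullet> y = x \<bullet> F y"
  shows "(F ^^ i) x \<bullet> y = x \<bullet> (F ^^ i) y"
  by (induction i arbitrary: x y) (auto simp: assms funpow_swap1)

lemma poly_op_self_adjoint:
  fixes F :: "'a::real_inner \<Rightarrow> 'a"
  assumes "\<And>x y. F x \<bullet> y = x \<bullet> F y"
  shows "poly_op F p x \<bullet> y = x \<bullet> poly_op F p y"
  unfolding poly_op_def
  by (simp add: inner_sum_left inner_sum_right funpow_self_adjoint[OF assms])

lemma poly_op_in_span_funpow:
  assumes "p = 0 \<or> degree p < m"
  shows "poly_op F p x \<in> span {(F ^^ i) x | i. i < m}"
proof (cases "p = 0")
  case False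
  then show ?thesis
    using assms unfolding poly_op_def by (intro span_sum span_scale span_base) auto
qed (simp add: span_zero)

section \<open>Chebyshev polynomials\<close>

text \<open>\<open>cheb_pair n = (T\<^sub>n, U\<^sub>n\<^sub>-\<^sub>1)\<close>, the Chebyshev polynomials of the first and second kind
  (with \<open>U\<^sub>-\<^sub>1 = 0\<close>).\<close>

fun cheb_pair :: "nat \<Rightarrow> real poly \<times> real poly" where
  "cheb_pair 0 = (1, 0)"
| "cheb_pair (Suc n) = ([:0,1:] * fst (cheb_pair n) + [:-1,0,1:] * snd (cheb_pair n),
                        fst (cheb_pair n) + [:0,1:] * snd (cheb_pair n))"

lemma cheb_pair_pell:
  "fst (cheb_pair n) * fst (cheb_pair n) - [:-1,0,1:] * (snd (cheb_pair n) * snd (cheb_pair n)) = 1"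
proof (induction n)
  case (Suc n)
  obtain t u where tu: "cheb_pair n = (t, u)" by fastforce
  have "t * t - [:-1,0,1:] * (u * u) = 1" using Suc tu by simp
  moreover have "[:0,1:] * [:0,1::real:] = [:-1,0,1:] + 1" by (simp add: one_pCons)
  ultimately have "([:0,1:] * t + [:-1,0,1:] * u) * ([:0,1:] * t + [:-1,0,1:] * u)
      - [:-1,0,1:] * ((t + [:0,1:] * u) * (t + [:0,1:] * u)) = 1"
    by algebra
  then show ?case using tu by simp
qed simp

lemma cheb_pair_degree:
  "degree (fst (cheb_pair n)) \<le> n \<and> (snd (cheb_pair n) = 0 \<or> degree (snd (cheb_pair n)) < n)"
proof (induction n)
  case (Suc n)
  obtain t u where tu: "cheb_pair n = (t, u)" by fastforce
  have t: "degree t \<le> n" and u: "u = 0 \<or> degree u < n" using Suc tu by auto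
  have "degree ([:0,1::real:] * t) \<le> Suc n"
    using t degree_mult_le[of "[:0,1::real:]" t] by simp
  moreover have "degree ([:-1,0,1::real:] * u) \<le> Suc n"
    using u degree_mult_le[of "[:-1,0,1::real:]" u] by auto
  ultimately have d1: "degree ([:0,1:] * t + [:-1,0,1:] * u) \<le> Suc n"
    by (rule degree_add_le)
  have "degree ([:0,1::real:] * u) \<le> n"
    using u degree_mult_le[of "[:0,1::real:]" u] by auto
  with t have d2: "degree (t + [:0,1:] * u) \<le> n"
    by (rule degree_add_le)
  show ?case using tu d1 d2 by simp
qed simp

lemma poly_cheb_pair:
  fixes s r :: real
  assumes rr: "r * r = s * s - 1"
  shows "poly (fst (cheb_pair n)) s + r * poly (snd (cheb_pair n)) s = (s + r) ^ n
       \<and> poly (fst (cheb_pair n)) s - r * poly (snd (cheb_pair n)) s = (s - r) ^ n"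
proof (induction n)
  case (Suc n)
  obtain t u where tu: "cheb_pair n = (t, u)" by fastforce
  let ?t = "poly t s" and ?u = "poly u s"
  have "?t + r * ?u = (s + r) ^ n" and "?t - r * ?u = (s - r) ^ n"
    using Suc tu by auto
  moreover have "(s * ?t + (s * s - 1) * ?u) + r * (?t + s * ?u) = (s + r) * (?t + r * ?u)"
    and "(s * ?t + (s * s - 1) * ?u) - r * (?t + s * ?u) = (s - r) * (?t - r * ?u)"
    using rr by algebra+
  moreover have "poly ([:0,1:] * t + [:-1,0,1:] * u) s = s * ?t + (s * s - 1) * ?u"
    by (simp add: algebra_simps)
  ultimately show ?case using tu by simp
qed simp

definition cheb_rate :: "real \<Rightarrow> real" where
  "cheb_rate \<kappa> = (sqrt \<kappa> - 1) / (sqrt \<kappa> + 1)"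

lemma cheb_rate_nonneg: "1 \<le> \<kappa> \<Longrightarrow> 0 \<le> cheb_rate \<kappa>"
  by (simp add: cheb_rate_def)

lemma chebyshev_value_ge:
  assumes "1 < \<kappa>"
  shows "1 \<le> 2 * cheb_rate \<kappa> ^ m * poly (fst (cheb_pair m)) ((\<kappa> + 1) / (\<kappa> - 1))"
proof -
  define s where "s = sqrt \<kappa>"
  define \<rho> where "\<rho> = cheb_rate \<kappa>"
  have s1: "1 < s" and ss: "\<kappa> = s * s" using assms by (auto simp: s_def)
  have n: "s - 1 \<noteq> 0" "s + 1 \<noteq> 0" "s * s \<noteq> 1"
    using s1 less_1_mult[OF s1 s1] by auto
  have \<rho>: "\<rho> = (s - 1) / (s + 1)" by (simp add: \<rho>_def cheb_rate_def s_def)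
  have \<rho>_pos: "0 < \<rho>" using s1 by (simp add: \<rho>)
  have \<sigma>: "(\<kappa> + 1) / (\<kappa> - 1) = (1 / \<rho> + \<rho>) / 2"
    unfolding \<rho> ss using n by (simp add: field_simps)
  have "((1 / \<rho> - \<rho>) / 2) * ((1 / \<rho> - \<rho>) / 2) = ((1 / \<rho> + \<rho>) / 2) * ((1 / \<rho> + \<rho>) / 2) - 1"
    using \<rho>_pos by (simp add: field_simps)
  from poly_cheb_pair[OF this, of m]
  have "2 * poly (fst (cheb_pair m)) ((1 / \<rho> + \<rho>) / 2) = (1 / \<rho>) ^ m + \<rho> ^ m"
    by (simp add: field_simps)
  then have "2 * \<rho> ^ m * poly (fst (cheb_pair m)) ((1 / \<rho> + \<rho>) / 2) = 1 + \<rho> ^ m * \<rho> ^ m"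
    using \<rho>_pos by (simp add: power_one_over field_simps)
  then show ?thesis by (simp add: \<sigma> \<rho>_def)
qed

section \<open>Self-adjoint operators\<close>

lemma self_adjoint_cauchy_schwarz:
  fixes N :: "'a::real_inner \<Rightarrow> 'a"
  assumes lin: "linear N" and sym: "\<And>x y. N x \<bullet> y = x \<bullet> N y"
    and sub: "subspace V" and psd: "\<And>x. x \<in> V \<Longrightarrow> 0 \<le> x \<bullet> N x"
    and uV: "u \<in> V" and wV: "w \<in> V"
  shows "(u \<bullet> N w)^2 \<le> (u \<bullet> N u) * (w \<bullet> N w)"
proof -
  let ?a = "u \<bullet> N u" and ?c = "u \<bullet> N w" and ?d = "w \<bullet> N w"
  have q: "0 \<le> ?a + 2 * t * ?c + t^2 * ?d" for t
  proof -
    have "u + t *\<^sub>R w \<in> V" using sub uV wV by (simp add: subspace_add subspace_scale)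
    then have "0 \<le> (u + t *\<^sub>R w) \<bullet> N (u + t *\<^sub>R w)" by (rule psd)
    also have "\<dots> = ?a + 2 * t * ?c + t^2 * ?d"
    proof -
      have "w \<bullet> N u = ?c" using sym[of w u] by (simp add: inner_commute)
      then show ?thesis
        using lin by (simp add: linear_add linear_scale inner_add_left inner_add_right
            algebra_simps power2_eq_square)
    qed
    finally show ?thesis .
  qed
  have d0: "0 \<le> ?d" using psd[OF wV] .
  show ?thesis
  proof (cases "?d = 0")
    case True
    have "?c = 0"
    proof (rule ccontr)
      assume "?c \<noteq> 0"
      have "0 \<le> ?a + 2 * (-(?a + 1) / (2 * ?c)) * ?c + (-(?a + 1) / (2 * ?c))^2 * ?d"
        by (rule q)
      also have "\<dots> = -1" using True \<open>?c \<noteq> 0\<close> by (simp add: field_simps)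
      finally show False by simp
    qed
    then show ?thesis using True by simp
  next
    case False
    then have dp: "0 < ?d" using d0 by simp
    have "0 \<le> ?a + 2 * (-?c / ?d) * ?c + (-?c / ?d)^2 * ?d" by (rule q)
    also have "\<dots> = ?a - ?c^2 / ?d" using dp by (simp add: field_simps power2_eq_square)
    finally have "?c^2 / ?d \<le> ?a" by simp
    then show ?thesis using dp by (simp add: field_simps mult.commute)
  qed
qed

lemma self_adjoint_polarization_le:
  fixes G :: "'a::real_inner \<Rightarrow> 'a"
  assumes lin: "linear G" and sym: "\<And>x y. G x \<bullet> y = x \<bullet> G y"
    and bd: "\<And>y. \<bar>y \<bullet> G y\<bar> \<le> y \<bullet> y"
  shows "4 * (u \<bullet> G v) \<le> 2 * (u \<bullet> u) + 2 * (v \<bullet> v)"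
proof -
  have "v \<bullet> G u = u \<bullet> G v" using sym[of v u] by (simp add: inner_commute)
  then have "(u + v) \<bullet> G (u + v) - (u - v) \<bullet> G (u - v) = 4 * (u \<bullet> G v)"
    using lin
    by (simp add: linear_add linear_diff inner_add_left inner_add_right inner_diff_left inner_diff_right)
  moreover have "(u + v) \<bullet> G (u + v) \<le> (u + v) \<bullet> (u + v)" using bd[of "u + v"] by simp
  moreover have "- ((u - v) \<bullet> G (u - v)) \<le> (u - v) \<bullet> (u - v)" using bd[of "u - v"] by simp
  ultimately have "4 * (u \<bullet> G v) \<le> (u + v) \<bullet> (u + v) + (u - v) \<bullet> (u - v)" by linarith
  also have "\<dots> = 2 * (u \<bullet> u) + 2 * (v \<bullet> v)"
    by (simp add: inner_add_left inner_add_right inner_diff_left inner_diff_right inner_commute)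
  finally show ?thesis .
qed

lemma self_adjoint_norm_le:
  fixes G :: "'a::real_inner \<Rightarrow> 'a"
  assumes lin: "linear G" and sym: "\<And>x y. G x \<bullet> y = x \<bullet> G y"
    and bd: "\<And>y. \<bar>y \<bullet> G y\<bar> \<le> y \<bullet> y"
  shows "norm (G y) \<le> norm y"
proof -
  note key = self_adjoint_polarization_le[OF lin sym bd]
  let ?z = "G y"
  show ?thesis
  proof (cases "?z = 0 \<or> y = 0")
    case True
    then show ?thesis using lin by (auto simp: linear_0)
  next
    case False
    then have zp: "0 < norm ?z" and yp: "0 < norm y" by auto
    have k: "4 * ((norm ?z *\<^sub>R y) \<bullet> G (norm y *\<^sub>R ?z))
          \<le> 2 * ((norm ?z *\<^sub>R y) \<bullet> (norm ?z *\<^sub>R y)) + 2 * ((norm y *\<^sub>R ?z) \<bullet> (norm y *\<^sub>R ?z))"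
      by (rule key)
    have eA: "(norm ?z *\<^sub>R y) \<bullet> G (norm y *\<^sub>R ?z) = norm ?z * norm y * (norm ?z)^2"
    proof -
      have "y \<bullet> G ?z = ?z \<bullet> ?z" using sym[of y ?z] by (simp add: inner_commute)
      moreover have "G (norm y *\<^sub>R ?z) = norm y *\<^sub>R G ?z" using lin by (simp add: linear_scale)
      ultimately show ?thesis by (simp add: power2_norm_eq_inner)
    qed
    have eB: "(norm ?z *\<^sub>R y) \<bullet> (norm ?z *\<^sub>R y) = (norm ?z)^2 * (norm y)^2"
      by (simp add: power2_norm_eq_inner[symmetric] power2_eq_square)
    have eC: "(norm y *\<^sub>R ?z) \<bullet> (norm y *\<^sub>R ?z) = (norm ?z)^2 * (norm y)^2"
      by (simp add: power2_norm_eq_inner[symmetric] power2_eq_square)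
    have "4 * (norm ?z * norm y * (norm ?z)^2) \<le> 4 * ((norm ?z)^2 * (norm y)^2)"
      using k unfolding eA eB eC by linarith
    then have "(norm ?z * norm y * norm ?z) * norm ?z \<le> (norm ?z * norm y * norm ?z) * norm y"
      by (simp add: power2_eq_square ac_simps)
    moreover have "0 < norm ?z * norm y * norm ?z" using zp yp by simp
    ultimately show ?thesis by (simp add: mult_le_cancel_left_pos)
  qed
qed

lemma self_adjoint_psd_null:
  fixes N :: "'a::real_inner \<Rightarrow> 'a"
  assumes lin: "linear N" and sym: "\<And>x y. N x \<bullet> y = x \<bullet> N y"
    and sub: "subspace V" and psd: "\<And>x. x \<in> V \<Longrightarrow> 0 \<le> x \<bullet> N x"
    and uV: "u \<in> V" and NuV: "N u \<in> V" and null: "u \<bullet> N u = 0"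
  shows "N u = 0"
proof -
  have "(u \<bullet> N (N u))\<^sup>2 \<le> (u \<bullet> N u) * (N u \<bullet> N (N u))"
    by (rule self_adjoint_cauchy_schwarz[OF lin sym sub psd uV NuV])
  then have "N u \<bullet> N u = 0" using null sym[of u "N u"] by simp
  then show ?thesis by simp
qed

lemma inner_linear_eq_unit:
  assumes "linear F" and "x \<noteq> 0"
  shows "x \<bullet> F x = (x \<bullet> x) * ((x /\<^sub>R norm x) \<bullet> F (x /\<^sub>R norm x))"
  using assms by (simp add: linear_scale field_simps dot_square_norm power2_eq_square)

section \<open>Chebyshev bounds and Krylov approximation\<close>

lemma chebyshev_contraction:
  fixes G :: "'a::real_inner \<Rightarrow> 'a"
  assumes lin: "linear G" and sym: "\<And>x y. G x \<bullet> y = x \<bullet> G y"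
    and contr: "\<And>y. norm (G y) \<le> norm y"
  shows "norm (poly_op G (fst (cheb_pair m)) x) \<le> norm x"
proof -
  define U where "U = snd (cheb_pair m)"
  define y where "y = poly_op G U x"
  have pell: "fst (cheb_pair m) * fst (cheb_pair m) = 1 + U * ([:-1,0,1:] * U)"
  proof -
    have "fst (cheb_pair m) * fst (cheb_pair m) = 1 + [:-1,0,1:] * (U * U)"
      using cheb_pair_pell[of m] unfolding U_def by (simp only: diff_eq_eq add.commute)
    then show ?thesis by (simp only: ac_simps)
  qed
  have "(norm (poly_op G (fst (cheb_pair m)) x))\<^sup>2
      = x \<bullet> poly_op G (fst (cheb_pair m) * fst (cheb_pair m)) x"
    by (simp add: power2_norm_eq_inner poly_op_self_adjoint[OF sym] poly_op_mult[OF lin])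
  also have "\<dots> = x \<bullet> x + x \<bullet> poly_op G U (poly_op G [:-1,0,1:] y)"
    unfolding pell y_def by (simp only: poly_op_add poly_op_1 poly_op_mult[OF lin] inner_add_right)
  also have "poly_op G [:-1,0,1:] y = G (G y) - y"
    using lin by (simp add: poly_op_pCons linear_0)
  also have "x \<bullet> poly_op G U (G (G y) - y) = y \<bullet> (G (G y) - y)"
    unfolding y_def by (rule poly_op_self_adjoint[OF sym, symmetric])
  also have "y \<bullet> (G (G y) - y) = (norm (G y))\<^sup>2 - (norm y)\<^sup>2"
    using sym[of y "G y"] by (simp add: inner_diff_right power2_norm_eq_inner)
  also have "\<dots> \<le> 0"
    using contr[of y] by (simp add: power_mono)
  finally have "(norm (poly_op G (fst (cheb_pair m)) x))\<^sup>2 \<le> (norm x)\<^sup>2"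
    by (simp add: power2_norm_eq_inner)
  then show ?thesis by (rule power2_le_imp_le) simp
qed

lemma rescaled_self_adjoint_norm_le:
  fixes F :: "'a::real_inner \<Rightarrow> 'a"
  assumes lin: "linear F" and sym: "\<And>x y. F x \<bullet> y = x \<bullet> F y" and ab: "a < b"
    and lo: "\<And>x. a * (x \<bullet> x) \<le> x \<bullet> F x" and hi: "\<And>x. x \<bullet> F x \<le> b * (x \<bullet> x)"
  shows "norm (((a + b) / (b - a)) *\<^sub>R y - (2 / (b - a)) *\<^sub>R F y) \<le> norm y"
proof (rule self_adjoint_norm_le[where G = "\<lambda>y. ((a + b) / (b - a)) *\<^sub>R y - (2 / (b - a)) *\<^sub>R F y"])
  show "linear (\<lambda>y. ((a + b) / (b - a)) *\<^sub>R y - (2 / (b - a)) *\<^sub>R F y)"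
    using lin by (intro linear_compose_sub linear_compose_scale_right) (auto simp: linear_ident)
  show "\<And>x y. (((a + b) / (b - a)) *\<^sub>R x - (2 / (b - a)) *\<^sub>R F x) \<bullet> y
      = x \<bullet> (((a + b) / (b - a)) *\<^sub>R y - (2 / (b - a)) *\<^sub>R F y)"
    using sym by (simp add: inner_diff_left inner_diff_right)
  fix y
  have "\<bar>(a + b) * (y \<bullet> y) - 2 * (y \<bullet> F y)\<bar> \<le> (b - a) * (y \<bullet> y)"
    using lo[of y] hi[of y] by (simp add: abs_le_iff algebra_simps)
  moreover have "y \<bullet> (((a + b) / (b - a)) *\<^sub>R y - (2 / (b - a)) *\<^sub>R F y)
      = ((a + b) * (y \<bullet> y) - 2 * (y \<bullet> F y)) / (b - a)"
    by (simp add: inner_diff_right diff_divide_distrib)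
  ultimately show "\<bar>y \<bullet> (((a + b) / (b - a)) *\<^sub>R y - (2 / (b - a)) *\<^sub>R F y)\<bar> \<le> y \<bullet> y"
    using ab by (simp add: abs_divide pos_divide_le_eq mult.commute)
qed

lemma chebyshev_residual_polynomial_gap:
  fixes F :: "'a::real_inner \<Rightarrow> 'a"
  assumes lin: "linear F" and sym: "\<And>x y. F x \<bullet> y = x \<bullet> F y"
    and a: "0 < a" and ab: "a < b"
    and lo: "\<And>x. a * (x \<bullet> x) \<le> x \<bullet> F x" and hi: "\<And>x. x \<bullet> F x \<le> b * (x \<bullet> x)"
  shows "\<exists>S. degree S \<le> m \<and> poly S 0 = 1 \<and>
           (\<forall>x. norm (poly_op F S x) \<le> 2 * cheb_rate (b / a) ^ m * norm x)"
proof -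
  \<comment> \<open>\<open>S = T\<^sub>m \<circ> L / T\<^sub>m(L 0)\<close>, where \<open>L\<close> maps \<open>[a, b]\<close> affinely onto \<open>[-1, 1]\<close>.\<close>
  define L where "L = [:(a + b) / (b - a), -2 / (b - a):]"
  define G where "G = poly_op F L"
  define Tm where "Tm = fst (cheb_pair m)"
  define c where "c = poly Tm ((b / a + 1) / (b / a - 1))"
  define \<rho> where "\<rho> = cheb_rate (b / a)"
  have G: "G y = ((a + b) / (b - a)) *\<^sub>R y - (2 / (b - a)) *\<^sub>R F y" for y
    using lin by (simp add: G_def L_def poly_op_pCons linear_scale linear_neg)
  have linG: "linear G" unfolding G_def by (rule linear_poly_op[OF lin])
  have symG: "\<And>x y. G x \<bullet> y = x \<bullet> G y" unfolding G_def by (rule poly_op_self_adjoint[OF sym])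
  have contr: "norm (G y) \<le> norm y" for y
    unfolding G by (rule rescaled_self_adjoint_norm_le[OF lin sym ab lo hi])
  have c: "1 \<le> 2 * \<rho> ^ m * c"
    unfolding \<rho>_def c_def Tm_def using a ab by (intro chebyshev_value_ge) simp
  have "0 \<le> \<rho>" unfolding \<rho>_def using a ab by (intro cheb_rate_nonneg) simp
  have c_pos: "0 < c"
  proof (rule ccontr)
    assume "\<not> 0 < c"
    with \<open>0 \<le> \<rho>\<close> have "2 * \<rho> ^ m * c \<le> 0" by (simp add: mult_nonneg_nonpos)
    with c show False by linarith
  qed
  define S where "S = smult (1 / c) (pcompose Tm L)"
  have "degree S \<le> m"
    using cheb_pair_degree[of m] by (simp add: S_def Tm_def L_def degree_pcompose)
  moreover have "poly S 0 = 1"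
  proof -
    have "poly L 0 = (b / a + 1) / (b / a - 1)" using a ab by (simp add: L_def field_simps)
    then show ?thesis using c_pos by (simp add: S_def poly_pcompose c_def)
  qed
  moreover have "norm (poly_op F S x) \<le> 2 * \<rho> ^ m * norm x" for x
  proof -
    have "norm (poly_op F S x) = norm (poly_op G Tm x) / c"
      using c_pos by (simp add: S_def poly_op_smult poly_op_pcompose[OF lin] G_def)
    also have "\<dots> \<le> norm x / c"
      unfolding Tm_def using c_pos chebyshev_contraction[OF linG symG contr]
      by (simp add: divide_right_mono)
    also have "\<dots> \<le> 2 * \<rho> ^ m * norm x"
      using mult_right_mono[OF c norm_ge_zero[of x]] c_pos by (simp add: pos_divide_le_eq mult_ac)
    finally show ?thesis .
  qed
  ultimately show ?thesis unfolding \<rho>_def by blast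
qed

lemma chebyshev_residual_polynomial:
  fixes F :: "'a::euclidean_space \<Rightarrow> 'a"
  assumes lin: "linear F" and sym: "\<And>x y. F x \<bullet> y = x \<bullet> F y"
    and a: "0 < a"
    and lo: "\<And>x. a * (x \<bullet> x) \<le> x \<bullet> F x" and hi: "\<And>x. x \<bullet> F x \<le> b * (x \<bullet> x)"
  shows "\<exists>S. degree S \<le> m \<and> poly S 0 = 1 \<and>
           (\<forall>x. norm (poly_op F S x) \<le> 2 * cheb_rate (b / a) ^ m * norm x)"
proof -
  obtain x0 :: 'a where "x0 \<noteq> 0" using nonzero_Basis nonempty_Basis by blast
  then have "0 < x0 \<bullet> x0" by simp
  moreover have "a * (x0 \<bullet> x0) \<le> b * (x0 \<bullet> x0)" using lo[of x0] hi[of x0] by linarith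
  ultimately have "a \<le> b" using mult_right_le_imp_le by blast
  then consider "m = 0" | "a = b" "0 < m" | "a < b" by linarith
  then show ?thesis
  proof cases
    case 1
    then show ?thesis by (intro exI[of _ 1]) simp
  next
    case 2
    have "F x - a *\<^sub>R x = 0" for x
    proof (rule self_adjoint_psd_null[where N = "\<lambda>x. F x - a *\<^sub>R x", OF _ _ subspace_UNIV])
      show "linear (\<lambda>x. F x - a *\<^sub>R x)"
        using lin by (intro linear_compose_sub linear_compose_scale_right) (auto simp: linear_ident)
      show "\<And>x y. (F x - a *\<^sub>R x) \<bullet> y = x \<bullet> (F y - a *\<^sub>R y)"
        using sym by (simp add: inner_diff_left inner_diff_right)
      show "\<And>x. 0 \<le> x \<bullet> (F x - a *\<^sub>R x)"
        using lo by (simp add: inner_diff_right)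
      show "x \<bullet> (F x - a *\<^sub>R x) = 0"
        using lo[of x] hi[of x] 2 by (simp add: inner_diff_right)
    qed simp_all
    then have "poly_op F [:1, -1 / a:] x = 0" for x
      using lin a by (simp add: poly_op_pCons linear_scale)
    then show ?thesis using 2 a by (intro exI[of _ "[:1, -1 / a:]"]) (simp add: cheb_rate_def)
  next
    case 3
    then show ?thesis by (rule chebyshev_residual_polynomial_gap[OF lin sym a _ lo hi])
  qed
qed

lemma krylov_approximation:
  fixes F :: "'a::euclidean_space \<Rightarrow> 'a"
  assumes lin: "linear F" and sym: "\<And>x y. F x \<bullet> y = x \<bullet> F y"
    and a: "0 < a"
    and lo: "\<And>x. a * (x \<bullet> x) \<le> x \<bullet> F x" and hi: "\<And>x. x \<bullet> F x \<le> b * (x \<bullet> x)"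
    and Fx: "F x = - y"
  shows "\<exists>w \<in> span {(F ^^ i) y | i. i < m}. norm (x - w) \<le> 2 * cheb_rate (b / a) ^ m * norm x"
proof -
  obtain S where deg: "degree S \<le> m" and S0: "poly S 0 = 1"
    and bound: "\<And>x. norm (poly_op F S x) \<le> 2 * cheb_rate (b / a) ^ m * norm x"
    using chebyshev_residual_polynomial[OF lin sym a lo hi] by blast
  \<comment> \<open>Writing \<open>S = 1 + X R\<close>, \<open>S(F) x = x - R(F) y\<close>.\<close>
  obtain R where S: "S = pCons 1 R"
    using S0 by (cases S) simp
  have "R = 0 \<or> degree R < m" using deg by (auto simp: S split: if_splits)
  then have "poly_op F R y \<in> span {(F ^^ i) y | i. i < m}" by (rule poly_op_in_span_funpow)
  moreover have "poly_op F S x = x - poly_op F R y"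
    using lin by (simp add: S poly_op_pCons_1 Fx linear_neg[OF linear_poly_op])
  ultimately show ?thesis using bound[of x] by auto
qed

section \<open>Rayleigh quotients\<close>

lemma self_adjoint_min_rayleigh:
  fixes F :: "'a::euclidean_space \<Rightarrow> 'a"
  assumes lin: "linear F" and sym: "\<And>x y. F x \<bullet> y = x \<bullet> F y"
    and sub: "subspace V" and inv: "\<And>x. x \<in> V \<Longrightarrow> F x \<in> V"
    and x0V: "x0 \<in> V" and x0: "x0 \<noteq> 0"
  obtains u where "u \<in> V" "norm u = 1" "F u = (u \<bullet> F u) *\<^sub>R u"
    "\<And>x. x \<in> V \<Longrightarrow> (u \<bullet> F u) * (x \<bullet> x) \<le> x \<bullet> F x"
proof -
  let ?S = "sphere 0 1 \<inter> V"
  have compact: "compact ?S" by (rule compact_Int_closed[OF compact_sphere closed_subspace[OF sub]])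
  have "x0 /\<^sub>R norm x0 \<in> ?S" using x0 x0V sub by (simp add: subspace_scale)
  then have nonempty: "?S \<noteq> {}" by blast
  have "bounded_linear F" using lin by (simp add: linear_conv_bounded_linear)
  then have cont: "continuous_on ?S (\<lambda>x. x \<bullet> F x)"
    by (intro continuous_intros linear_continuous_on)
  obtain u where uS: "u \<in> ?S" and umin: "\<And>y. y \<in> ?S \<Longrightarrow> u \<bullet> F u \<le> y \<bullet> F y"
    using continuous_attains_inf[OF compact nonempty cont] by blast
  define \<mu> where "\<mu> = u \<bullet> F u"
  have uV: "u \<in> V" and un: "norm u = 1" using uS by auto
  have lower: "\<mu> * (x \<bullet> x) \<le> x \<bullet> F x" if xV: "x \<in> V" for x
  proof (cases "x = 0")
    case False
    then have "x /\<^sub>R norm x \<in> ?S" using xV sub by (simp add: subspace_scale)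
    then have "\<mu> \<le> (x /\<^sub>R norm x) \<bullet> F (x /\<^sub>R norm x)" unfolding \<mu>_def by (rule umin)
    then have "\<mu> * (x \<bullet> x) \<le> ((x /\<^sub>R norm x) \<bullet> F (x /\<^sub>R norm x)) * (x \<bullet> x)"
      by (rule mult_right_mono) simp
    then show ?thesis unfolding inner_linear_eq_unit[OF lin False] by (metis mult.commute)
  qed (simp add: linear_0[OF lin])
  \<comment> \<open>\<open>F - \<mu>\<close> is positive semidefinite on \<open>V\<close> and vanishes in the direction \<open>u\<close>.\<close>
  have "F u - \<mu> *\<^sub>R u = 0"
  proof (rule self_adjoint_psd_null[where N = "\<lambda>x. F x - \<mu> *\<^sub>R x", OF _ _ sub _ uV])
    show "linear (\<lambda>x. F x - \<mu> *\<^sub>R x)"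
      using lin by (intro linear_compose_sub linear_compose_scale_right) (auto simp: linear_ident)
    show "\<And>x y. (F x - \<mu> *\<^sub>R x) \<bullet> y = x \<bullet> (F y - \<mu> *\<^sub>R y)"
      using sym by (simp add: inner_diff_left inner_diff_right)
    show "\<And>x. x \<in> V \<Longrightarrow> 0 \<le> x \<bullet> (F x - \<mu> *\<^sub>R x)"
      using lower by (simp add: inner_diff_right)
    show "F u - \<mu> *\<^sub>R u \<in> V" using inv[OF uV] uV sub by (simp add: subspace_diff subspace_scale)
    show "u \<bullet> (F u - \<mu> *\<^sub>R u) = 0" using un by (simp add: inner_diff_right \<mu>_def norm_eq_1)
  qed
  then have "F u = (u \<bullet> F u) *\<^sub>R u" by (simp add: \<mu>_def)
  then show thesis by (rule that[OF uV un _ lower[unfolded \<mu>_def]])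
qed

lemma self_adjoint_spectral_bounds:
  fixes F :: "'a::euclidean_space \<Rightarrow> 'a"
  assumes lin: "linear F" and sym: "\<And>x y. F x \<bullet> y = x \<bullet> F y"
    and sub: "subspace V" and inv: "\<And>x. x \<in> V \<Longrightarrow> F x \<in> V"
    and x0V: "x0 \<in> V" and x0: "x0 \<noteq> 0"
    and pos: "\<And>x. x \<in> V \<Longrightarrow> x \<noteq> 0 \<Longrightarrow> 0 < x \<bullet> F x"
  defines "N \<equiv> (\<lambda>x. norm (F x)) ` (V \<inter> sphere 0 1)"
  shows "0 < Inf N" and "Inf N \<le> Sup N"
    and "\<And>x. x \<in> V \<Longrightarrow> Inf N * (x \<bullet> x) \<le> x \<bullet> F x"
    and "\<And>x. x \<in> V \<Longrightarrow> x \<bullet> F x \<le> Sup N * (x \<bullet> x)"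
proof -
  obtain u where uV: "u \<in> V" and un: "norm u = 1" and ue: "F u = (u \<bullet> F u) *\<^sub>R u"
    and ul: "\<And>x. x \<in> V \<Longrightarrow> (u \<bullet> F u) * (x \<bullet> x) \<le> x \<bullet> F x"
    using self_adjoint_min_rayleigh[OF lin sym sub inv x0V x0] by blast
  define \<mu> where "\<mu> = u \<bullet> F u"
  have "u \<noteq> 0" using un by auto
  then have \<mu>_pos: "0 < \<mu>" using pos[OF uV] by (simp add: \<mu>_def)
  have bounded: "bdd_above N"
  proof (rule bdd_aboveI)
    fix s assume "s \<in> N"
    then obtain x where "norm x = 1" "s = norm (F x)" by (auto simp: N_def)
    then show "s \<le> onorm F"
      using onorm[of F x] lin by (simp add: linear_conv_bounded_linear)
  qed
  have "norm (F u) = \<mu>" using ue un \<mu>_pos by (simp add: \<mu>_def[symmetric])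
  then have "\<mu> \<in> N" unfolding N_def using uV un by (intro image_eqI[where x = u]) auto
  moreover have "\<mu> \<le> s" if "s \<in> N" for s
  proof -
    obtain x where x: "x \<in> V" "norm x = 1" and s: "s = norm (F x)"
      using \<open>s \<in> N\<close> by (auto simp: N_def)
    have "\<mu> = \<mu> * (x \<bullet> x)" using x by (simp add: norm_eq_1)
    also have "\<dots> \<le> x \<bullet> F x" using ul[OF x(1)] by (simp add: \<mu>_def)
    also have "\<dots> \<le> s" using norm_cauchy_schwarz[of x "F x"] x s by simp
    finally show ?thesis .
  qed
  ultimately have Inf: "Inf N = \<mu>" by (intro cInf_eq_minimum)
  show "0 < Inf N" using Inf \<mu>_pos by simp
  show "Inf N \<le> Sup N" using Inf \<open>\<mu> \<in> N\<close> bounded by (simp add: cSup_upper)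
  show "Inf N * (x \<bullet> x) \<le> x \<bullet> F x" if "x \<in> V" for x using ul[OF that] by (simp add: Inf \<mu>_def)
  show "x \<bullet> F x \<le> Sup N * (x \<bullet> x)" if xV: "x \<in> V" for x
  proof (cases "x = 0")
    case False
    let ?z = "x /\<^sub>R norm x"
    have "?z \<bullet> F ?z \<le> norm (F ?z)" using norm_cauchy_schwarz[of ?z "F ?z"] False by simp
    also have "\<dots> \<le> Sup N"
      using xV False sub bounded by (intro cSup_upper) (auto simp: N_def subspace_scale)
    finally have "(?z \<bullet> F ?z) * (x \<bullet> x) \<le> Sup N * (x \<bullet> x)" by (rule mult_right_mono) simp
    then show ?thesis unfolding inner_linear_eq_unit[OF lin False] by (metis mult.commute)
  qed (simp add: linear_0[OF lin])
qed

lemma self_adjoint_extend_off_subspace: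
  fixes G P :: "'a::real_inner \<Rightarrow> 'a"
  assumes linG: "linear G" and symG: "\<And>x y. G x \<bullet> y = x \<bullet> G y"
    and GP: "\<And>x. G (P x) = G x"
    and linP: "linear P" and symP: "\<And>x y. P x \<bullet> y = x \<bullet> P y"
    and PV: "\<And>x. P x \<in> V" and P_id: "\<And>x. x \<in> V \<Longrightarrow> P x = x"
    and lo: "\<And>x. x \<in> V \<Longrightarrow> a * (x \<bullet> x) \<le> x \<bullet> G x"
    and hi: "\<And>x. x \<in> V \<Longrightarrow> x \<bullet> G x \<le> b * (x \<bullet> x)"
    and ab: "a \<le> b"
  defines "\<Phi> \<equiv> \<lambda>x. G x + a *\<^sub>R (x - P x)"
  shows "linear \<Phi>" and "\<And>x y. \<Phi> x \<bullet> y = x \<bullet> \<Phi> y"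
    and "\<And>x. a * (x \<bullet> x) \<le> x \<bullet> \<Phi> x" and "\<And>x. x \<bullet> \<Phi> x \<le> b * (x \<bullet> x)"
proof -
  show "linear \<Phi>" unfolding \<Phi>_def
    by (intro linear_compose_add linG linear_compose_scale_right linear_compose_sub linear_ident linP)
  show "\<Phi> x \<bullet> y = x \<bullet> \<Phi> y" for x y
    using symG[of x y] symP[of x y] by (simp add: \<Phi>_def inner_add_left inner_add_right
        inner_diff_left inner_diff_right)
  have orth: "P x \<bullet> (x - P x) = 0" for x
    using symP[of x "P x"] P_id[OF PV, of x] by (simp add: inner_diff_right inner_commute[of "P x" x])
  have "x \<bullet> G x = P x \<bullet> G (P x)" for x
    by (metis GP symG inner_commute)
  then have quad: "x \<bullet> \<Phi> x = P x \<bullet> G (P x) + a * ((x - P x) \<bullet> (x - P x))" for x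
    using orth[of x] by (simp add: \<Phi>_def inner_add_right inner_diff_left inner_diff_right)
  have split: "x \<bullet> x = P x \<bullet> P x + (x - P x) \<bullet> (x - P x)" for x
    using orth[of x] by (simp add: inner_diff_left inner_diff_right inner_commute)
  show "a * (x \<bullet> x) \<le> x \<bullet> \<Phi> x" for x
    using lo[OF PV, of x] unfolding quad[of x] split[of x] by (simp add: distrib_left)
  show "x \<bullet> \<Phi> x \<le> b * (x \<bullet> x)" for x
    using hi[OF PV, of x] mult_right_mono[OF ab inner_ge_zero[of "x - P x"]]
    unfolding quad[of x] split[of x] by (simp add: distrib_left)
qed

lemma norm_sq_le_onorm_mult_energy:
  fixes M :: "'a::euclidean_space \<Rightarrow> 'a"
  assumes lin: "linear M" and sym: "\<And>x y. M x \<bullet> y = x \<bullet> M y"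
    and psd: "\<And>x. 0 \<le> x \<bullet> M x"
  shows "(norm (M e))\<^sup>2 \<le> onorm M * (e \<bullet> M e)"
proof -
  have bl: "bounded_linear M" using lin by (simp add: linear_conv_bounded_linear)
  define t where "t = (norm (M e))\<^sup>2"
  have "t = e \<bullet> M (M e)"
    using sym[of e "M e"] by (simp add: t_def power2_norm_eq_inner)
  then have "t * t = (e \<bullet> M (M e))\<^sup>2" by (simp add: power2_eq_square)
  also have "\<dots> \<le> (e \<bullet> M e) * (M e \<bullet> M (M e))"
    using psd by (intro self_adjoint_cauchy_schwarz[OF lin sym, of UNIV]) auto
  also have "\<dots> \<le> (e \<bullet> M e) * (onorm M * t)"
  proof (rule mult_left_mono[OF _ psd])
    have "M e \<bullet> M (M e) \<le> norm (M e) * norm (M (M e))" by (rule norm_cauchy_schwarz)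
    also have "\<dots> \<le> norm (M e) * (onorm M * norm (M e))"
      by (intro mult_left_mono onorm[OF bl] norm_ge_zero)
    finally show "M e \<bullet> M (M e) \<le> onorm M * t"
      by (simp add: t_def power2_eq_square mult.left_commute)
  qed
  finally have "t * t \<le> (onorm M * (e \<bullet> M e)) * t" by (simp only: ac_simps)
  moreover have "0 \<le> onorm M * (e \<bullet> M e)" using onorm_pos_le[OF bl] psd by simp
  ultimately show ?thesis
  proof (cases "t = 0")
    case False
    then have "0 < t" by (simp add: t_def)
    with \<open>t * t \<le> (onorm M * (e \<bullet> M e)) * t\<close> show ?thesis
      unfolding t_def[symmetric] by (rule mult_right_le_imp_le)
  qed (simp add: t_def)
qed

lemma norm_le_onorm_of_energy_le:
  fixes M :: "'a::euclidean_space \<Rightarrow> 'a"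
  assumes lin: "linear M" and sym: "\<And>x y. M x \<bullet> y = x \<bullet> M y"
    and psd: "\<And>x. 0 \<le> x \<bullet> M x" and energy: "e \<bullet> M e \<le> d \<bullet> M d"
  shows "norm (M e) \<le> onorm M * norm d"
proof -
  have bl: "bounded_linear M" using lin by (simp add: linear_conv_bounded_linear)
  have "(norm (M e))\<^sup>2 \<le> onorm M * (e \<bullet> M e)"
    by (rule norm_sq_le_onorm_mult_energy[OF lin sym psd])
  also have "\<dots> \<le> onorm M * (d \<bullet> M d)"
    by (intro mult_left_mono energy onorm_pos_le[OF bl])
  also have "\<dots> \<le> onorm M * (norm d * (onorm M * norm d))"
  proof (intro mult_left_mono onorm_pos_le[OF bl])
    show "d \<bullet> M d \<le> norm d * (onorm M * norm d)"
      using norm_cauchy_schwarz[of d "M d"] mult_left_mono[OF onorm[OF bl, of d] norm_ge_zero[of d]]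
      by linarith
  qed
  finally have "(norm (M e))\<^sup>2 \<le> (onorm M * norm d)\<^sup>2"
    by (simp add: power2_eq_square ac_simps)
  then show ?thesis by (rule power2_le_imp_le) (simp add: onorm_pos_le[OF bl])
qed

lemma exists_sphere_point_near:
  fixes V :: "'a::real_inner set"
  assumes sub: "subspace V" and uV: "u \<in> V" and un: "norm u = 1"
    and D: "0 < \<Delta>" and x: "norm x = \<Delta>"
    and yV: "y \<in> V" and orth: "\<And>v. v \<in> V \<Longrightarrow> v \<bullet> (x - y) = 0"
    and close: "norm (x - y) \<le> c * \<Delta>"
  shows "\<exists>z \<in> V. norm z = \<Delta> \<and> norm (z - x) \<le> c * sqrt (\<Delta>\<^sup>2 + (norm (x - y))\<^sup>2)"
proof -
  define \<epsilon> where "\<epsilon> = norm (x - y)"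
  define z where "z = (if y = 0 then \<Delta> *\<^sub>R u else (\<Delta> / norm y) *\<^sub>R y)"
  have zV: "z \<in> V" unfolding z_def using uV yV sub by (auto simp: subspace_scale)
  have zn: "norm z = \<Delta>" unfolding z_def using un D by auto
  have pyth: "\<Delta>\<^sup>2 = (norm y)\<^sup>2 + \<epsilon>\<^sup>2"
    using norm_add_Pythagorean[of y "x - y"] orth[OF yV] x by (simp add: orthogonal_def \<epsilon>_def)
  then have "(norm y)\<^sup>2 \<le> \<Delta>\<^sup>2" by simp
  then have yD: "norm y \<le> \<Delta>" by (rule power2_le_imp_le) (use D in simp)
  have "norm (z - y) = \<Delta> - norm y"
  proof (cases "y = 0")
    case False
    then have "z - y = (\<Delta> / norm y - 1) *\<^sub>R y" by (simp add: z_def algebra_simps)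
    then show ?thesis using False yD by (simp add: abs_of_nonneg field_simps)
  qed (use D in \<open>simp add: z_def un\<close>)
  moreover have "z - y \<in> V" using sub zV yV by (rule subspace_diff)
  ultimately have zx: "(norm (z - x))\<^sup>2 = (\<Delta> - norm y)\<^sup>2 + \<epsilon>\<^sup>2"
    using norm_add_Pythagorean[of "z - y" "y - x"] orth[of "z - y"]
    by (simp add: orthogonal_def \<epsilon>_def norm_minus_commute inner_diff_right)
  \<comment> \<open>\<open>(\<Delta> - |y|) \<Delta> \<le> (\<Delta> - |y|)(\<Delta> + |y|) = \<epsilon>\<^sup>2\<close>, so \<open>\<Delta> - |y| \<le> c \<epsilon>\<close>.\<close>
  have "(\<Delta> - norm y) * \<Delta> \<le> \<epsilon>\<^sup>2"
    using pyth yD mult_left_mono[of \<Delta> "\<Delta> + norm y" "\<Delta> - norm y"]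
    by (simp add: power2_eq_square algebra_simps)
  also have "\<epsilon>\<^sup>2 \<le> (c * \<Delta>) * \<epsilon>" using close by (simp add: \<epsilon>_def power2_eq_square mult_right_mono)
  finally have "\<Delta> - norm y \<le> c * \<epsilon>" using D by (simp add: ac_simps)
  then have "(\<Delta> - norm y)\<^sup>2 \<le> c\<^sup>2 * \<epsilon>\<^sup>2"
    using yD by (simp add: power_mono power_mult_distrib[symmetric])
  moreover have "\<epsilon>\<^sup>2 \<le> c\<^sup>2 * \<Delta>\<^sup>2"
    using close by (simp add: \<epsilon>_def power_mono power_mult_distrib[symmetric])
  ultimately have "(norm (z - x))\<^sup>2 \<le> c\<^sup>2 * (\<Delta>\<^sup>2 + \<epsilon>\<^sup>2)" using zx by (simp add: algebra_simps)
  then have "norm (z - x) \<le> sqrt (c\<^sup>2 * (\<Delta>\<^sup>2 + \<epsilon>\<^sup>2))" by (rule real_le_rsqrt)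
  moreover have "0 \<le> c" using close D zero_le_mult_iff[of c \<Delta>] norm_ge_zero[of "x - y"] by linarith
  ultimately show ?thesis using zV zn by (auto simp: \<epsilon>_def real_sqrt_mult)
qed

section \<open>Symmetric matrices, orthonormal families and Krylov spaces\<close>

lemma matrix_vector_mul_self_adjoint:
  fixes A :: "real^'n^'n"
  assumes "transpose A = A"
  shows "(A *v x) \<bullet> y = x \<bullet> (A *v y)"
  by (metis dot_lmul_matrix vector_transpose_matrix assms)

lemma finite_eigvals:
  fixes A :: "real^'n^'n"
  assumes symA: "transpose A = A"
  shows "finite (eigvals A)"
proof -
  define ev where "ev \<mu> = (SOME v. v \<noteq> 0 \<and> A *v v = \<mu> *\<^sub>R v)" for \<mu>
  have ev: "ev \<mu> \<noteq> 0 \<and> A *v ev \<mu> = \<mu> *\<^sub>R ev \<mu>" if "\<mu> \<in> eigvals A" for \<mu>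
    using that unfolding eigvals_def ev_def by (rule CollectE) (rule someI_ex)
  have inj: "inj_on ev (eigvals A)"
  proof (rule inj_onI)
    fix \<mu> \<nu> assume m: "\<mu> \<in> eigvals A" and n: "\<nu> \<in> eigvals A" and e: "ev \<mu> = ev \<nu>"
    have "\<mu> *\<^sub>R ev \<mu> = \<nu> *\<^sub>R ev \<mu>" using ev[OF m] ev[OF n] e by metis
    then show "\<mu> = \<nu>" using ev[OF m] by simp
  qed
  have orth: "pairwise orthogonal (ev ` eigvals A)"
  proof (rule pairwiseI, clarify)
    fix \<mu> \<nu> assume m: "\<mu> \<in> eigvals A" and n: "\<nu> \<in> eigvals A" and ne: "ev \<mu> \<noteq> ev \<nu>"
    then have mn: "\<mu> \<noteq> \<nu>" by auto
    have "\<mu> * (ev \<mu> \<bullet> ev \<nu>) = (A *v ev \<mu>) \<bullet> ev \<nu>" using ev[OF m] by simp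
    also have "\<dots> = ev \<mu> \<bullet> (A *v ev \<nu>)" by (rule matrix_vector_mul_self_adjoint[OF symA])
    also have "\<dots> = \<nu> * (ev \<mu> \<bullet> ev \<nu>)" using ev[OF n] by simp
    finally have "(\<mu> - \<nu>) * (ev \<mu> \<bullet> ev \<nu>) = 0" by (simp add: algebra_simps)
    then show "orthogonal (ev \<mu>) (ev \<nu>)" using mn by (simp add: orthogonal_def)
  qed
  have "0 \<notin> ev ` eigvals A" using ev by auto
  then have "independent (ev ` eigvals A)" using orth by (intro pairwise_orthogonal_independent)
  then have "finite (ev ` eigvals A)" by (rule independent_imp_finite)
  then show ?thesis using inj by (rule finite_imageD)
qed

lemma eigvals_bounds:
  fixes A :: "real^'n^'n"
  assumes symA: "transpose A = A"
  shows "Min (eigvals A) * (x \<bullet> x) \<le> x \<bullet> (A *v x)"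
    and "x \<bullet> (A *v x) \<le> Max (eigvals A) * (x \<bullet> x)"
proof -
  have fin: "finite (eigvals A)" by (rule finite_eigvals[OF symA])
  have sym: "\<And>x y. (A *v x) \<bullet> y = x \<bullet> (A *v y)" by (rule matrix_vector_mul_self_adjoint[OF symA])
  obtain x0 :: "real^'n" where x0: "x0 \<noteq> 0" using nonzero_Basis nonempty_Basis by blast
  obtain u where "norm u = 1" and "A *v u = (u \<bullet> (A *v u)) *\<^sub>R u"
    and umin: "\<And>x. x \<in> UNIV \<Longrightarrow> (u \<bullet> (A *v u)) * (x \<bullet> x) \<le> x \<bullet> (A *v x)"
    by (rule self_adjoint_min_rayleigh[OF matrix_vector_mul_linear sym subspace_UNIV UNIV_I UNIV_I x0]) blast
  then have "u \<bullet> (A *v u) \<in> eigvals A" unfolding eigvals_def by (auto intro!: exI[of _ u])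
  then have "Min (eigvals A) \<le> u \<bullet> (A *v u)" using fin by simp
  then show "Min (eigvals A) * (x \<bullet> x) \<le> x \<bullet> (A *v x)"
    using umin[of x] by (meson UNIV_I inner_ge_zero mult_right_mono order_trans)
  have linN: "linear (\<lambda>x. - (A *v x))" by (simp add: linear_compose_neg)
  have symN: "\<And>x y. - (A *v x) \<bullet> y = x \<bullet> - (A *v y)" by (simp add: sym)
  obtain w where "norm w = 1" and "- (A *v w) = (w \<bullet> - (A *v w)) *\<^sub>R w"
    and wmin: "\<And>x. x \<in> UNIV \<Longrightarrow> (w \<bullet> - (A *v w)) * (x \<bullet> x) \<le> x \<bullet> - (A *v x)"
    by (rule self_adjoint_min_rayleigh[OF linN symN subspace_UNIV UNIV_I UNIV_I x0]) blast
  then have "w \<bullet> (A *v w) \<in> eigvals A"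
    unfolding eigvals_def by (auto intro!: exI[of _ w])
  then have "w \<bullet> (A *v w) \<le> Max (eigvals A)" using fin by simp
  moreover have "x \<bullet> (A *v x) \<le> (w \<bullet> (A *v w)) * (x \<bullet> x)" using wmin[of x] by simp
  ultimately show "x \<bullet> (A *v x) \<le> Max (eigvals A) * (x \<bullet> x)"
    by (meson inner_ge_zero mult_right_mono order_trans)
qed

lemma shifted_matrix_bounds:
  fixes A :: "real^'n^'n"
  assumes "transpose A = A"
  shows "(Min (eigvals A) + c) * (x \<bullet> x) \<le> x \<bullet> (A *v x + c *\<^sub>R x)"
    and "x \<bullet> (A *v x + c *\<^sub>R x) \<le> (Max (eigvals A) + c) * (x \<bullet> x)"
  using eigvals_bounds[OF assms, of x] by (simp_all add: inner_add_right algebra_simps)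

definition orthonormal_upto :: "nat \<Rightarrow> (nat \<Rightarrow> 'a::real_inner) \<Rightarrow> bool" where
  "orthonormal_upto k q \<longleftrightarrow> (\<forall>i\<in>{1..k}. \<forall>j\<in>{1..k}. q i \<bullet> q j = (if i = j then 1 else 0))"

definition proj_upto :: "nat \<Rightarrow> (nat \<Rightarrow> 'a::real_inner) \<Rightarrow> 'a \<Rightarrow> 'a" where
  "proj_upto k q x = (\<Sum>i=1..k. (q i \<bullet> x) *\<^sub>R q i)"

lemma inner_orthonormal_sum:
  assumes "orthonormal_upto k q" and "i \<in> {1..k}"
  shows "q i \<bullet> (\<Sum>j=1..k. v j *\<^sub>R q j) = v i"
proof -
  have "q i \<bullet> (\<Sum>j=1..k. v j *\<^sub>R q j) = (\<Sum>j=1..k. v j * (q i \<bullet> q j))"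
    by (simp add: inner_sum_right)
  also have "\<dots> = (\<Sum>j=1..k. if i = j then v j else 0)"
    using assms unfolding orthonormal_upto_def by (intro sum.cong) auto
  also have "\<dots> = v i" using assms(2) by (simp add: sum.delta)
  finally show ?thesis .
qed

lemma inner_orthonormal_sums:
  assumes "orthonormal_upto k q"
  shows "(\<Sum>i=1..k. v i *\<^sub>R q i) \<bullet> (\<Sum>j=1..k. w j *\<^sub>R q j) = (\<Sum>i=1..k. v i * w i)"
  using inner_orthonormal_sum[OF assms] by (simp add: inner_sum_left)

lemma norm_orthonormal_sum:
  assumes "orthonormal_upto k q"
  shows "norm (\<Sum>i=1..k. v i *\<^sub>R q i) = vnorm k v"
  unfolding vnorm_def norm_eq_sqrt_inner inner_orthonormal_sums[OF assms]
  by (simp add: power2_eq_square)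

lemma sum_in_span_upto: "(\<Sum>i=1..k. v i *\<^sub>R q i) \<in> span (q ` {1..k})"
  by (intro span_sum span_scale span_base) auto

lemma proj_upto_in_span: "proj_upto k q x \<in> span (q ` {1..k})"
  unfolding proj_upto_def by (rule sum_in_span_upto)

lemma linear_proj_upto: "linear (proj_upto k q)"
  by (rule linearI)
    (simp_all add: proj_upto_def inner_add_right scaleR_add_left sum.distrib scaleR_sum_right)

lemma proj_upto_self_adjoint: "proj_upto k q x \<bullet> y = x \<bullet> proj_upto k q y"
  by (simp add: proj_upto_def inner_sum_left inner_sum_right inner_commute mult.commute)

lemma inner_proj_upto:
  "orthonormal_upto k q \<Longrightarrow> i \<in> {1..k} \<Longrightarrow> q i \<bullet> proj_upto k q x = q i \<bullet> x"
  unfolding proj_upto_def by (rule inner_orthonormal_sum)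

lemma proj_upto_id:
  assumes o: "orthonormal_upto k q" and x: "x \<in> span (q ` {1..k})"
  shows "proj_upto k q x = x"
proof -
  have "subspace {x. proj_upto k q x = x}"
    using linear_proj_upto[of k q] by (auto simp: subspace_def linear_add linear_0 linear_scale)
  moreover have "q ` {1..k} \<subseteq> {x. proj_upto k q x = x}"
  proof clarify
    fix j assume j: "j \<in> {1..k}"
    have "proj_upto k q (q j) = (\<Sum>i=1..k. (if i = j then q i else 0))"
      using o j unfolding orthonormal_upto_def proj_upto_def by (intro sum.cong) auto
    then show "proj_upto k q (q j) = q j" using j by (simp add: sum.delta')
  qed
  ultimately have "span (q ` {1..k}) \<subseteq> {x. proj_upto k q x = x}" by (rule span_minimal[rotated])
  then show ?thesis using x by blast
qed

lemma orthogonal_span_upto: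
  assumes "\<And>i. i \<in> {1..k} \<Longrightarrow> q i \<bullet> z = 0" and "y \<in> span (q ` {1..k})"
  shows "y \<bullet> z = 0"
proof -
  have "span (q ` {1..k}) \<subseteq> {y. y \<bullet> z = 0}"
    using assms(1) by (intro span_minimal subspace_hyperplane2) auto
  then show ?thesis using assms(2) by blast
qed

lemma proj_upto_residual_orthogonal:
  assumes "orthonormal_upto k q" and "y \<in> span (q ` {1..k})"
  shows "y \<bullet> (x - proj_upto k q x) = 0"
  using assms(2) by (rule orthogonal_span_upto[rotated]) (simp add: inner_diff_right inner_proj_upto[OF assms(1)])

lemma proj_upto_best_approx:
  assumes o: "orthonormal_upto k q" and w: "w \<in> span (q ` {1..k})"
  shows "norm (x - proj_upto k q x) \<le> norm (x - w)"
proof -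
  have "proj_upto k q x - w \<in> span (q ` {1..k})"
    using proj_upto_in_span w by (rule span_diff)
  from proj_upto_residual_orthogonal[OF o this, of x]
  have "(norm (x - w))\<^sup>2 = (norm (x - proj_upto k q x))\<^sup>2 + (norm (proj_upto k q x - w))\<^sup>2"
    using norm_add_Pythagorean[of "x - proj_upto k q x" "proj_upto k q x - w"]
    by (simp add: orthogonal_def inner_commute)
  then have "(norm (x - proj_upto k q x))\<^sup>2 \<le> (norm (x - w))\<^sup>2" by simp
  then show ?thesis by (rule power2_le_imp_le) simp
qed

lemma subspace_krylov: "subspace (krylov A g m)"
  unfolding krylov_def by (rule subspace_span)

lemma krylov_mono: "m \<le> m' \<Longrightarrow> krylov A g m \<subseteq> krylov A g m'"
  unfolding krylov_def by (intro span_mono) auto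

lemma matrix_vector_mul_in_krylov:
  assumes "x \<in> krylov A g m"
  shows "A *v x \<in> krylov A g (Suc m)"
proof -
  have "(\<lambda>x. A *v x) ` {((\<lambda>x. A *v x) ^^ j) g | j. j < m}
      \<subseteq> {((\<lambda>x. A *v x) ^^ j) g | j. j < Suc m}"
  proof clarify
    fix j assume "j < m"
    then show "\<exists>i. A *v ((\<lambda>x. A *v x) ^^ j) g = ((\<lambda>x. A *v x) ^^ i) g \<and> i < Suc m"
      by (intro exI[of _ "Suc j"]) simp
  qed
  then have "(\<lambda>x. A *v x) ` krylov A g m \<subseteq> krylov A g (Suc m)"
    unfolding krylov_def span_linear_image[OF matrix_vector_mul_linear, symmetric] by (rule span_mono)
  with assms show ?thesis by blast
qed

lemma shifted_funpow_in_krylov: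
  "((\<lambda>x. A *v x + c *\<^sub>R x) ^^ i) g \<in> krylov A g (Suc i)"
proof (induction i)
  case 0
  show ?case unfolding krylov_def by (intro span_base) (auto intro!: exI[of _ 0])
next
  case (Suc i)
  let ?x = "((\<lambda>x. A *v x + c *\<^sub>R x) ^^ i) g"
  have "A *v ?x \<in> krylov A g (Suc (Suc i))" using Suc by (rule matrix_vector_mul_in_krylov)
  moreover have "?x \<in> krylov A g (Suc (Suc i))" using Suc krylov_mono[of "Suc i" "Suc (Suc i)"] by auto
  then have "c *\<^sub>R ?x \<in> krylov A g (Suc (Suc i))" by (rule subspace_scale[OF subspace_krylov])
  ultimately show ?case by (simp add: subspace_add[OF subspace_krylov])
qed

lemma span_shifted_funpow_subset_krylov:
  "span {((\<lambda>x. A *v x + c *\<^sub>R x) ^^ i) g | i. i < m} \<subseteq> krylov A g m"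
proof (rule span_minimal[OF _ subspace_krylov], clarify)
  fix i assume "i < m"
  then have "Suc i \<le> m" by simp
  then show "((\<lambda>x. A *v x + c *\<^sub>R x) ^^ i) g \<in> krylov A g m"
    by (rule subsetD[OF krylov_mono shifted_funpow_in_krylov])
qed

lemma funpow_apply_cong:
  assumes "\<And>j. j < i \<Longrightarrow> (G ^^ j) x \<in> W" and "\<And>y. y \<in> W \<Longrightarrow> F y = G y"
  shows "(F ^^ i) x = (G ^^ i) x"
  using assms(1) by (induction i) (simp_all add: assms(2))

lemma trs_obj_energy:
  fixes A :: "real^'n^'n"
  assumes sym: "transpose A = A"
    and kkt: "A *v xopt + \<mu> *\<^sub>R xopt = - g"
    and "norm x = \<Delta>" and "norm xopt = \<Delta>"
  shows "2 * (trs_obj A g x - trs_obj A g xopt)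
       = (x - xopt) \<bullet> (A *v (x - xopt) + \<mu> *\<^sub>R (x - xopt))"
proof -
  have g: "g = - (A *v xopt) - \<mu> *\<^sub>R xopt" using arg_cong[OF kkt, of uminus] by simp
  have "xopt \<bullet> (A *v x) = x \<bullet> (A *v xopt)"
    using matrix_vector_mul_self_adjoint[OF sym, of xopt x] by (simp add: inner_commute)
  moreover have "x \<bullet> x = xopt \<bullet> xopt" using assms(3,4) by (simp add: dot_square_norm)
  ultimately show ?thesis
    unfolding trs_obj_def g
    by (simp add: inner_diff_left inner_diff_right inner_add_right matrix_vector_mult_diff_distrib
        inner_commute[of xopt x] algebra_simps)
qed

section \<open>The Lanczos process and the GLTR iterate\<close>

lemma proj_upto_eq_0: "(\<And>i. i \<in> {1..k} \<Longrightarrow> q i \<bullet> x = 0) \<Longrightarrow> proj_upto k q x = 0"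
  by (simp add: proj_upto_def)

lemma mvec_shift_diag:
  assumes "i \<in> {1..k}"
  shows "mvec k (\<lambda>i j. M i j + (if i = j then c else 0)) v i = mvec k M v i + c * v i"
proof -
  have "(\<Sum>j=1..k. (if i = j then c else 0) * v j) = (\<Sum>j=1..k. if i = j then c * v i else 0)"
    by (intro sum.cong) auto
  then show ?thesis using assms by (simp add: mvec_def distrib_right sum.distrib)
qed

locale lanczos =
  fixes A :: "real^'n^'n" and g :: "real^'n" and k :: nat and q :: "nat \<Rightarrow> real^'n"
    and T :: "nat \<Rightarrow> nat \<Rightarrow> real" and \<beta> :: real
  assumes symmetric: "transpose A = A"
    and g_nonzero: "g \<noteq> 0"
    and k_pos: "1 \<le> k"
    and orthonormal: "orthonormal_upto k q"
    and q_1: "q 1 = (1 / norm g) *\<^sub>R g"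
    and span_q: "\<And>m. m \<in> {1..k} \<Longrightarrow> span (q ` {1..m}) = krylov A g m"
    and T_eq: "\<And>i j. i \<in> {1..k} \<Longrightarrow> j \<in> {1..k} \<Longrightarrow> T i j = q i \<bullet> (A *v q j)"
    and q_next_norm: "norm (q (k + 1)) = 1"
    and beta_nonneg: "0 \<le> \<beta>"
    and lanczos_relation: "\<And>j. j \<in> {1..k} \<Longrightarrow>
          A *v q j = (\<Sum>i=1..k. T i j *\<^sub>R q i) + (if j = k then \<beta> *\<^sub>R q (k + 1) else 0)"
begin

lemma A_self_adjoint: "(A *v x) \<bullet> y = x \<bullet> (A *v y)"
  by (rule matrix_vector_mul_self_adjoint[OF symmetric])

lemma span_q_eq_krylov: "m \<le> k \<Longrightarrow> span (q ` {1..m}) = krylov A g m"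
  using span_q[of m] by (cases "m = 0") (auto simp: krylov_def)

lemma q_in_krylov: "i \<in> {1..k} \<Longrightarrow> q i \<in> krylov A g k"
  using span_q_eq_krylov[of k] span_base[of "q i" "q ` {1..k}"] by auto

lemma norm_q: "i \<in> {1..k} \<Longrightarrow> norm (q i) = 1"
  using orthonormal by (simp add: orthonormal_upto_def norm_eq_1)

lemma g_eq: "g = norm g *\<^sub>R q 1"
  using q_1 g_nonzero by simp

lemma g_in_krylov: "g \<in> krylov A g k"
  using subspace_scale[OF subspace_krylov q_in_krylov, of 1 "norm g"] k_pos g_eq by simp

lemma proj_in_krylov: "proj_upto k q x \<in> krylov A g k"
  using proj_upto_in_span span_q_eq_krylov by blast

lemma proj_krylov_id: "x \<in> krylov A g k \<Longrightarrow> proj_upto k q x = x"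
  using proj_upto_id[OF orthonormal] span_q_eq_krylov by blast

lemma krylov_coords: "x \<in> krylov A g k \<Longrightarrow> (\<Sum>i=1..k. (q i \<bullet> x) *\<^sub>R q i) = x"
  using proj_krylov_id by (simp add: proj_upto_def)

lemma krylov_residual_orthogonal: "y \<in> krylov A g k \<Longrightarrow> y \<bullet> (x - proj_upto k q x) = 0"
  using proj_upto_residual_orthogonal[OF orthonormal] span_q_eq_krylov by blast

lemma q_next_orthogonal:
  assumes "i \<in> {1..k}"
  shows "q i \<bullet> (\<beta> *\<^sub>R q (k + 1)) = 0"
proof -
  have "\<beta> *\<^sub>R q (k + 1) = A *v q k - (\<Sum>l=1..k. T l k *\<^sub>R q l)"
    using lanczos_relation[of k] k_pos by simp
  moreover have "q i \<bullet> (\<Sum>l=1..k. T l k *\<^sub>R q l) = T i k"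
    by (rule inner_orthonormal_sum[OF orthonormal assms])
  moreover have "q i \<bullet> (A *v q k) = T i k" using T_eq assms k_pos by simp
  ultimately show ?thesis by (simp add: inner_diff_right)
qed

lemma orthogonal_krylov:
  "(\<And>i. i \<in> {1..k} \<Longrightarrow> q i \<bullet> z = 0) \<Longrightarrow> y \<in> krylov A g k \<Longrightarrow> y \<bullet> z = 0"
  using orthogonal_span_upto[of k q z y] span_q_eq_krylov by blast

lemma matrix_vector_mul_sum_q:
  "A *v (\<Sum>j=1..k. v j *\<^sub>R q j)
     = (\<Sum>i=1..k. (\<Sum>j=1..k. T i j * v j) *\<^sub>R q i) + (\<beta> * v k) *\<^sub>R q (k + 1)"
proof -
  have "A *v (\<Sum>j=1..k. v j *\<^sub>R q j) = (\<Sum>j=1..k. v j *\<^sub>R (A *v q j))"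
    by (simp add: linear_sum[OF matrix_vector_mul_linear] matrix_vector_mult_scaleR o_def)
  also have "\<dots> = (\<Sum>j=1..k. v j *\<^sub>R ((\<Sum>i=1..k. T i j *\<^sub>R q i)
                     + (if j = k then \<beta> *\<^sub>R q (k + 1) else 0)))"
    using lanczos_relation by (intro sum.cong) auto
  also have "\<dots> = (\<Sum>j=1..k. (\<Sum>i=1..k. (T i j * v j) *\<^sub>R q i)
                     + (if j = k then (\<beta> * v k) *\<^sub>R q (k + 1) else 0))"
    by (intro sum.cong) (auto simp: scaleR_add_right scaleR_sum_right mult.commute)
  also have "\<dots> = (\<Sum>j=1..k. \<Sum>i=1..k. (T i j * v j) *\<^sub>R q i)
                  + (\<Sum>j=1..k. if j = k then (\<beta> * v k) *\<^sub>R q (k + 1) else 0)"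
    by (rule sum.distrib)
  also have "(\<Sum>j=1..k. \<Sum>i=1..k. (T i j * v j) *\<^sub>R q i) = (\<Sum>i=1..k. (\<Sum>j=1..k. T i j * v j) *\<^sub>R q i)"
    by (subst sum.swap) (simp add: scaleR_sum_left)
  also have "(\<Sum>j=1..k. if j = k then (\<beta> * v k) *\<^sub>R q (k + 1) else 0) = (\<beta> * v k) *\<^sub>R q (k + 1)"
    using k_pos by (simp add: sum.delta')
  finally show ?thesis .
qed

lemma shifted_sum_q:
  "A *v (\<Sum>j=1..k. v j *\<^sub>R q j) + c *\<^sub>R (\<Sum>j=1..k. v j *\<^sub>R q j)
     = (\<Sum>i=1..k. mvec k (\<lambda>i j. T i j + (if i = j then c else 0)) v i *\<^sub>R q i)
       + v k *\<^sub>R (\<beta> *\<^sub>R q (k + 1))"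
proof -
  have "mvec k (\<lambda>i j. T i j + (if i = j then c else 0)) v i *\<^sub>R q i
      = (\<Sum>j=1..k. T i j * v j) *\<^sub>R q i + (c * v i) *\<^sub>R q i" if "i \<in> {1..k}" for i
    using mvec_shift_diag[OF that, of T c v] by (simp add: mvec_def scaleR_add_left)
  then have "(\<Sum>i=1..k. mvec k (\<lambda>i j. T i j + (if i = j then c else 0)) v i *\<^sub>R q i)
      = (\<Sum>i=1..k. (\<Sum>j=1..k. T i j * v j) *\<^sub>R q i + (c * v i) *\<^sub>R q i)"
    by (rule sum.cong[OF refl])
  then show ?thesis
    unfolding matrix_vector_mul_sum_q by (simp add: sum.distrib scaleR_sum_right)
qed

lemma proj_shifted_sum_q:
  "proj_upto k q (A *v (\<Sum>j=1..k. v j *\<^sub>R q j) + c *\<^sub>R (\<Sum>j=1..k. v j *\<^sub>R q j))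
     = (\<Sum>i=1..k. mvec k (\<lambda>i j. T i j + (if i = j then c else 0)) v i *\<^sub>R q i)"
proof -
  have "proj_upto k q (v k *\<^sub>R (\<beta> *\<^sub>R q (k + 1))) = 0"
    by (rule proj_upto_eq_0) (use q_next_orthogonal in auto)
  then show ?thesis
    unfolding shifted_sum_q
    using proj_upto_id[OF orthonormal sum_in_span_upto] linear_proj_upto[of k q]
    by (simp add: linear_add)
qed

lemma gltr_obj_eq_trs_obj: "gltr_obj k T (norm g) v = trs_obj A g (\<Sum>i=1..k. v i *\<^sub>R q i)"
proof -
  let ?x = "\<Sum>i=1..k. v i *\<^sub>R q i"
  have "?x \<bullet> (A *v ?x) = (\<Sum>j=1..k. \<Sum>i=1..k. v j * (v i * (q i \<bullet> (A *v q j))))"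
    by (simp add: linear_sum[OF matrix_vector_mul_linear] matrix_vector_mult_scaleR o_def
        inner_sum_left inner_sum_right sum_distrib_left)
  also have "\<dots> = (\<Sum>i=1..k. \<Sum>j=1..k. v i * T i j * v j)"
    by (subst sum.swap) (auto simp: T_eq intro!: sum.cong)
  finally have "?x \<bullet> (A *v ?x) = (\<Sum>i=1..k. \<Sum>j=1..k. v i * T i j * v j)" .
  moreover have "?x \<bullet> g = norm g * v 1"
    using inner_orthonormal_sum[OF orthonormal, of 1 v] k_pos
    by (subst g_eq) (simp add: inner_commute)
  ultimately show ?thesis by (simp add: gltr_obj_def trs_obj_def mult.commute)
qed

end

locale gltr = lanczos +
  fixes \<Delta> :: real and h :: "nat \<Rightarrow> real" and lk :: real and xk :: "real^'n"
  assumes radius_pos: "0 < \<Delta>"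
    and h_min: "\<And>h'. vnorm k h' \<le> \<Delta> \<Longrightarrow> gltr_obj k T (norm g) h \<le> gltr_obj k T (norm g) h'"
    and h_kkt: "\<And>i. i \<in> {1..k} \<Longrightarrow>
          (\<Sum>j=1..k. (T i j + (if i = j then lk else 0)) * h j) = (if i = 1 then - norm g else 0)"
    and shifted_T_pos: "\<And>v. \<exists>i\<in>{1..k}. v i \<noteq> 0 \<Longrightarrow>
          0 < (\<Sum>i=1..k. \<Sum>j=1..k. v i * (T i j + (if i = j then lk else 0)) * v j)"
    and xk_eq: "xk = (\<Sum>i=1..k. h i *\<^sub>R q i)"
    and xk_norm: "norm xk = \<Delta>"
begin

abbreviation shifted_T :: "nat \<Rightarrow> nat \<Rightarrow> real" where
  "shifted_T \<equiv> \<lambda>i j. T i j + (if i = j then lk else 0)"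

abbreviation compression :: "real^'n \<Rightarrow> real^'n" where
  "compression x \<equiv> proj_upto k q (A *v x + lk *\<^sub>R x)"

lemma xk_in_krylov: "xk \<in> krylov A g k"
  unfolding xk_eq span_q_eq_krylov[OF order_refl, symmetric] by (rule sum_in_span_upto)

lemma h_k_eq: "h k = q k \<bullet> xk"
  using inner_orthonormal_sum[OF orthonormal, of k h] k_pos by (simp add: xk_eq)

lemma residual_eq: "A *v xk + lk *\<^sub>R xk + g = h k *\<^sub>R (\<beta> *\<^sub>R q (k + 1))"
proof -
  have "(\<Sum>i=1..k. mvec k shifted_T h i *\<^sub>R q i)
      = (\<Sum>i=1..k. if i = 1 then (- norm g) *\<^sub>R q 1 else 0)"
    using h_kkt by (intro sum.cong) (auto simp: mvec_def)
  also have "\<dots> = - g" using k_pos g_eq by (simp add: sum.delta')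
  finally show ?thesis using shifted_sum_q[of h lk] by (simp add: xk_eq)
qed

lemma residual_orthogonal: "y \<in> krylov A g k \<Longrightarrow> y \<bullet> (A *v xk + lk *\<^sub>R xk + g) = 0"
  unfolding residual_eq by (rule orthogonal_krylov) (use q_next_orthogonal in auto)

lemma norm_residual: "norm (A *v xk + lk *\<^sub>R xk + g) = \<beta> * \<bar>h k\<bar>"
  unfolding residual_eq using q_next_norm beta_nonneg by (simp add: abs_mult)

lemma trs_obj_xk_le:
  assumes "z \<in> krylov A g k" and "norm z \<le> \<Delta>"
  shows "trs_obj A g xk \<le> trs_obj A g z"
proof -
  note z = krylov_coords[OF assms(1)]
  then have "vnorm k (\<lambda>i. q i \<bullet> z) \<le> \<Delta>"
    using norm_orthonormal_sum[OF orthonormal, of "\<lambda>i. q i \<bullet> z"] assms(2) by simp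
  then have "gltr_obj k T (norm g) h \<le> gltr_obj k T (norm g) (\<lambda>i. q i \<bullet> z)" by (rule h_min)
  then show ?thesis unfolding gltr_obj_eq_trs_obj z xk_eq[symmetric] .
qed

lemma compression_coords:
  "compression (\<Sum>j=1..k. v j *\<^sub>R q j) = (\<Sum>i=1..k. mvec k shifted_T v i *\<^sub>R q i)"
  by (rule proj_shifted_sum_q)

lemma compression_quadratic_form:
  assumes "x \<in> krylov A g k"
  shows "x \<bullet> compression x = (\<Sum>i=1..k. \<Sum>j=1..k. (q i \<bullet> x) * shifted_T i j * (q j \<bullet> x))"
proof -
  have "x \<bullet> compression x
      = (\<Sum>i=1..k. (q i \<bullet> x) *\<^sub>R q i) \<bullet> (\<Sum>i=1..k. mvec k shifted_T (\<lambda>i. q i \<bullet> x) i *\<^sub>R q i)"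
    using compression_coords[of "\<lambda>i. q i \<bullet> x"] krylov_coords[OF assms] by simp
  also have "\<dots> = (\<Sum>i=1..k. \<Sum>j=1..k. (q i \<bullet> x) * shifted_T i j * (q j \<bullet> x))"
    unfolding inner_orthonormal_sums[OF orthonormal] by (simp add: mvec_def sum_distrib_left mult.assoc)
  finally show ?thesis .
qed

lemma compression_pos:
  assumes "x \<in> krylov A g k" and "x \<noteq> 0"
  shows "0 < x \<bullet> compression x"
proof -
  have "\<exists>i\<in>{1..k}. q i \<bullet> x \<noteq> 0"
  proof (rule ccontr)
    assume "\<not> (\<exists>i\<in>{1..k}. q i \<bullet> x \<noteq> 0)"
    then have "(\<Sum>i=1..k. (q i \<bullet> x) *\<^sub>R q i) = 0" by simp
    with krylov_coords[OF assms(1)] assms(2) show False by simp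
  qed
  then show ?thesis
    unfolding compression_quadratic_form[OF assms(1)] by (rule shifted_T_pos)
qed

lemma cond2_shifted_T:
  defines "N \<equiv> (\<lambda>x. norm (compression x)) ` (krylov A g k \<inter> sphere 0 1)"
  shows "cond2 k shifted_T = Sup N / Inf N"
proof -
  have "(\<lambda>v. vnorm k (mvec k shifted_T v)) ` {v. vnorm k v = 1} = N"
  proof (intro equalityI subsetI)
    fix s assume "s \<in> (\<lambda>v. vnorm k (mvec k shifted_T v)) ` {v. vnorm k v = 1}"
    then obtain v where v: "vnorm k v = 1" and s: "s = vnorm k (mvec k shifted_T v)" by blast
    let ?x = "\<Sum>i=1..k. v i *\<^sub>R q i"
    have "?x \<in> krylov A g k"
      using sum_in_span_upto span_q_eq_krylov[OF order_refl] by blast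
    moreover have "norm ?x = 1" using v unfolding norm_orthonormal_sum[OF orthonormal] .
    moreover have "s = norm (compression ?x)"
      unfolding s compression_coords norm_orthonormal_sum[OF orthonormal] ..
    ultimately show "s \<in> N" unfolding N_def by force
  next
    fix s assume "s \<in> N"
    then obtain x where x: "x \<in> krylov A g k" "norm x = 1" and s: "s = norm (compression x)"
      by (auto simp: N_def)
    let ?v = "\<lambda>i. q i \<bullet> x"
    have "vnorm k ?v = 1"
      using x(2) unfolding norm_orthonormal_sum[OF orthonormal, of ?v, symmetric] krylov_coords[OF x(1)] .
    moreover have "s = vnorm k (mvec k shifted_T ?v)"
      using s compression_coords[of ?v] unfolding krylov_coords[OF x(1)]
      by (simp only: norm_orthonormal_sum[OF orthonormal])
    ultimately show "s \<in> (\<lambda>v. vnorm k (mvec k shifted_T v)) ` {v. vnorm k v = 1}" by blast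
  qed
  then show ?thesis by (simp add: cond2_def)
qed

lemma linear_compression_proj: "linear (\<lambda>x. compression (proj_upto k q x))"
proof -
  have "linear (\<lambda>x. A *v x + lk *\<^sub>R x)"
    by (intro linear_compose_add matrix_vector_mul_linear linear_compose_scale_right linear_ident)
  then show ?thesis
    using linear_compose[OF linear_compose[OF linear_proj_upto] linear_proj_upto] by (simp add: o_def)
qed

lemma compression_proj_self_adjoint:
  "compression (proj_upto k q x) \<bullet> y = x \<bullet> compression (proj_upto k q y)"
proof -
  have "compression (proj_upto k q x) \<bullet> y
      = (A *v proj_upto k q x + lk *\<^sub>R proj_upto k q x) \<bullet> proj_upto k q y"
    by (rule proj_upto_self_adjoint)
  moreover have "x \<bullet> compression (proj_upto k q y)
      = proj_upto k q x \<bullet> (A *v proj_upto k q y + lk *\<^sub>R proj_upto k q y)"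
    by (rule proj_upto_self_adjoint[symmetric])
  ultimately show ?thesis by (simp add: inner_add_left inner_add_right A_self_adjoint)
qed

text \<open>The operator \<open>\<Phi>\<close> below acts on \<open>K\<^sub>k\<close> as \<open>T\<^sub>k + \<lambda>\<^sub>k I\<close> does in the Lanczos basis and as its smallest
  eigenvalue on the orthogonal complement.\<close>

lemma compression_extension:
  obtains \<Phi> a b where "linear \<Phi>" "\<And>x y. \<Phi> x \<bullet> y = x \<bullet> \<Phi> y" "0 < a"
    "\<And>x. a * (x \<bullet> x) \<le> x \<bullet> \<Phi> x" "\<And>x. x \<bullet> \<Phi> x \<le> b * (x \<bullet> x)"
    "cond2 k shifted_T = b / a" "\<And>x. x \<in> krylov A g k \<Longrightarrow> \<Phi> x = compression x"
proof -
  define P where "P = proj_upto k q"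
  define G where "G x = compression (P x)" for x
  define N where "N = (\<lambda>x. norm (G x)) ` (krylov A g k \<inter> sphere 0 1)"
  have linP: "linear P" unfolding P_def by (rule linear_proj_upto)
  have PP: "P (P x) = P x" for x unfolding P_def by (rule proj_krylov_id[OF proj_in_krylov])
  have G_krylov: "G x = compression x" if "x \<in> krylov A g k" for x
    using proj_krylov_id[OF that] by (simp add: G_def P_def)
  have linG: "linear G" using linear_compression_proj by (simp add: G_def[abs_def] P_def)
  have symG: "G x \<bullet> y = x \<bullet> G y" for x y
    unfolding G_def P_def by (rule compression_proj_self_adjoint)
  have GP: "G (P x) = G x" for x by (simp add: G_def PP)
  have inv: "\<And>x. x \<in> krylov A g k \<Longrightarrow> G x \<in> krylov A g k" by (simp add: G_def proj_in_krylov)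
  have "1 \<in> {1..k}" using k_pos by simp
  then have q1: "q 1 \<in> krylov A g k" "q 1 \<noteq> 0" using q_in_krylov norm_q by force+
  have pos: "\<And>x. x \<in> krylov A g k \<Longrightarrow> x \<noteq> 0 \<Longrightarrow> 0 < x \<bullet> G x"
    using compression_pos G_krylov by simp
  have bounds: "0 < Inf N" "Inf N \<le> Sup N"
    "\<And>x. x \<in> krylov A g k \<Longrightarrow> Inf N * (x \<bullet> x) \<le> x \<bullet> G x"
    "\<And>x. x \<in> krylov A g k \<Longrightarrow> x \<bullet> G x \<le> Sup N * (x \<bullet> x)"
    using self_adjoint_spectral_bounds[OF linG symG subspace_krylov inv q1 pos, folded N_def]
    by simp_all
  have "N = (\<lambda>x. norm (compression x)) ` (krylov A g k \<inter> sphere 0 1)"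
    unfolding N_def using G_krylov by (intro image_cong) auto
  then have cond: "cond2 k shifted_T = Sup N / Inf N" by (simp add: cond2_shifted_T)
  have symP: "P x \<bullet> y = x \<bullet> P y" for x y unfolding P_def by (rule proj_upto_self_adjoint)
  have PV: "P x \<in> krylov A g k" for x unfolding P_def by (rule proj_in_krylov)
  have P_id: "x \<in> krylov A g k \<Longrightarrow> P x = x" for x unfolding P_def by (rule proj_krylov_id)
  define \<Phi> where "\<Phi> = (\<lambda>x. G x + Inf N *\<^sub>R (x - P x))"
  have ext: "linear \<Phi>" "\<And>x y. \<Phi> x \<bullet> y = x \<bullet> \<Phi> y"
    "\<And>x. Inf N * (x \<bullet> x) \<le> x \<bullet> \<Phi> x" "\<And>x. x \<bullet> \<Phi> x \<le> Sup N * (x \<bullet> x)"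
    unfolding \<Phi>_def
    using self_adjoint_extend_off_subspace[OF linG symG GP linP symP PV P_id bounds(3,4,2)]
    by simp_all
  have "\<Phi> x = compression x" if "x \<in> krylov A g k" for x
    using G_krylov[OF that] P_id[OF that] by (simp add: \<Phi>_def)
  then show thesis by (rule that[OF ext(1,2) bounds(1) ext(3,4) cond])
qed

lemma shift_in_krylov:
  assumes "y \<in> krylov A g (k - 1)"
  shows "A *v y + c *\<^sub>R y \<in> krylov A g k"
proof -
  have "A *v y \<in> krylov A g k"
    using matrix_vector_mul_in_krylov[OF assms] k_pos by simp
  moreover have "c *\<^sub>R y \<in> krylov A g k"
    using assms krylov_mono[of "k - 1" k] by (auto intro: subspace_scale[OF subspace_krylov])
  ultimately show ?thesis by (rule subspace_add[OF subspace_krylov])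
qed

lemma q_k_orthogonal_krylov:
  assumes "w \<in> krylov A g (k - 1)"
  shows "q k \<bullet> w = 0"
proof -
  have "w \<bullet> q k = 0"
  proof (rule orthogonal_span_upto)
    show "w \<in> span (q ` {1..k - 1})" using assms span_q_eq_krylov[of "k - 1"] by simp
    show "q i \<bullet> q k = 0" if "i \<in> {1..k - 1}" for i
      using orthonormal that k_pos by (auto simp: orthonormal_upto_def)
  qed
  then show ?thesis by (simp add: inner_commute)
qed

lemma residual_le_lanczos_bound:
  "norm (A *v xk + lk *\<^sub>R xk + g) \<le> 2 * (\<beta> * \<Delta> * cheb_rate (cond2 k shifted_T) ^ (k - 1))"
proof -
  obtain \<Phi> a b where lin: "linear \<Phi>" and sym: "\<And>x y. \<Phi> x \<bullet> y = x \<bullet> \<Phi> y" and a: "0 < a"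
    and lo: "\<And>x. a * (x \<bullet> x) \<le> x \<bullet> \<Phi> x" and hi: "\<And>x. x \<bullet> \<Phi> x \<le> b * (x \<bullet> x)"
    and cond: "cond2 k shifted_T = b / a"
    and \<Phi>_krylov: "\<And>x. x \<in> krylov A g k \<Longrightarrow> \<Phi> x = compression x"
    by (rule compression_extension) blast
  let ?S = "\<lambda>x. A *v x + lk *\<^sub>R x"
  have "proj_upto k q (A *v xk + lk *\<^sub>R xk + g) = 0"
    by (rule proj_upto_eq_0) (simp add: residual_orthogonal q_in_krylov)
  then have "\<Phi> xk = - g"
    using \<Phi>_krylov[OF xk_in_krylov] proj_krylov_id[OF g_in_krylov] linear_proj_upto[of k q]
    by (simp add: linear_add eq_neg_iff_add_eq_0)
  then obtain w where w: "w \<in> span {(\<Phi> ^^ i) g | i. i < k - 1}"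
    and close: "norm (xk - w) \<le> 2 * cheb_rate (b / a) ^ (k - 1) * norm xk"
    using krylov_approximation[OF lin sym a lo hi] by blast
  \<comment> \<open>On \<open>K\<^sub>k\<^sub>-\<^sub>1\<close> the operator \<open>\<Phi>\<close> agrees with \<open>A + \<lambda>\<^sub>k I\<close>, so \<open>w \<in> K\<^sub>k\<^sub>-\<^sub>1 \<bottom> q\<^sub>k\<close>.\<close>
  have "(\<Phi> ^^ i) g = (?S ^^ i) g" if "i < k - 1" for i
  proof (rule funpow_apply_cong)
    show "(?S ^^ j) g \<in> krylov A g (k - 1)" if "j < i" for j
    proof -
      have "Suc j \<le> k - 1" using that \<open>i < k - 1\<close> by simp
      then show ?thesis by (rule subsetD[OF krylov_mono shifted_funpow_in_krylov])
    qed
    show "\<Phi> y = ?S y" if "y \<in> krylov A g (k - 1)" for y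
      using \<Phi>_krylov[of y] proj_krylov_id[OF shift_in_krylov[OF that]] that krylov_mono[of "k - 1" k]
      by auto
  qed
  then have "{(\<Phi> ^^ i) g | i. i < k - 1} = {(?S ^^ i) g | i. i < k - 1}" by force
  with w have "w \<in> span {(?S ^^ i) g | i. i < k - 1}" by simp
  then have "w \<in> krylov A g (k - 1)" by (rule subsetD[OF span_shifted_funpow_subset_krylov])
  then have "h k = q k \<bullet> (xk - w)" by (simp add: h_k_eq inner_diff_right q_k_orthogonal_krylov)
  then have "\<bar>h k\<bar> \<le> norm (xk - w)"
    using Cauchy_Schwarz_ineq2[of "q k" "xk - w"] norm_q[of k] k_pos by simp
  also have "\<dots> \<le> 2 * cheb_rate (cond2 k shifted_T) ^ (k - 1) * \<Delta>"
    using close by (simp add: cond xk_norm)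
  finally have "\<beta> * \<bar>h k\<bar> \<le> \<beta> * (2 * cheb_rate (cond2 k shifted_T) ^ (k - 1) * \<Delta>)"
    using beta_nonneg by (rule mult_left_mono)
  then show ?thesis unfolding norm_residual by (simp add: ac_simps)
qed

lemma exists_krylov_point_near_xopt:
  assumes kkt: "A *v xopt + lopt *\<^sub>R xopt = - g"
    and easy: "- Min (eigvals A) < lopt"
    and xopt_norm: "norm xopt = \<Delta>"
  shows "\<exists>z \<in> krylov A g k. norm z = \<Delta> \<and>
           norm (z - xopt) \<le> 2 * cheb_rate ((Max (eigvals A) + lopt) / (Min (eigvals A) + lopt)) ^ k
                              * sqrt (\<Delta>\<^sup>2 + (norm (xopt - proj_upto k q xopt))\<^sup>2)"
proof -
  let ?M = "\<lambda>x. A *v x + lopt *\<^sub>R x"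
  define c where "c = 2 * cheb_rate ((Max (eigvals A) + lopt) / (Min (eigvals A) + lopt)) ^ k"
  have lin: "linear ?M"
    by (intro linear_compose_add matrix_vector_mul_linear linear_compose_scale_right linear_ident)
  have sym: "?M x \<bullet> y = x \<bullet> ?M y" for x y by (simp add: inner_add_left inner_add_right A_self_adjoint)
  have "0 < Min (eigvals A) + lopt" using easy by simp
  from krylov_approximation[OF lin sym this shifted_matrix_bounds[OF symmetric] kkt, of k]
  obtain w where "w \<in> span {(?M ^^ i) g | i. i < k}" and close: "norm (xopt - w) \<le> c * \<Delta>"
    by (auto simp: c_def xopt_norm)
  then have "w \<in> span (q ` {1..k})"
    using span_shifted_funpow_subset_krylov span_q_eq_krylov[OF order_refl] by blast
  then have eps: "norm (xopt - proj_upto k q xopt) \<le> c * \<Delta>"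
    using proj_upto_best_approx[OF orthonormal] close order_trans by blast
  have "1 \<in> {1..k}" using k_pos by simp
  then show ?thesis
    unfolding c_def[symmetric]
    by (intro exists_sphere_point_near[OF subspace_krylov q_in_krylov norm_q radius_pos xopt_norm
          proj_in_krylov _ eps] krylov_residual_orthogonal)
qed

lemma residual_le_trs_bound:
  assumes kkt: "A *v xopt + lopt *\<^sub>R xopt = - g"
    and easy: "- Min (eigvals A) < lopt"
    and xopt_norm: "norm xopt = \<Delta>"
  shows "norm (A *v xk + lk *\<^sub>R xk + g)
         \<le> 2 * (onorm (\<lambda>x. (A + lopt *\<^sub>R mat 1) *v x)
                 * sqrt (\<Delta>\<^sup>2 + (norm (xopt - proj_upto k q xopt))\<^sup>2)
                 * cheb_rate ((Max (eigvals A) + lopt) / (Min (eigvals A) + lopt)) ^ k)"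
proof -
  define M where "M x = A *v x + lopt *\<^sub>R x" for x
  have M: "(\<lambda>x. (A + lopt *\<^sub>R mat 1) *v x) = M"
    by (auto simp: M_def matrix_vector_mult_add_rdistrib scaleR_matrix_vector_assoc[symmetric])
  have lin: "linear M" unfolding M[symmetric] by (rule matrix_vector_mul_linear)
  have sym: "M x \<bullet> y = x \<bullet> M y" for x y by (simp add: M_def inner_add_left inner_add_right A_self_adjoint)
  have psd: "0 \<le> x \<bullet> M x" for x
  proof -
    have "0 \<le> (Min (eigvals A) + lopt) * (x \<bullet> x)" using easy by simp
    then show ?thesis using shifted_matrix_bounds(1)[OF symmetric, of lopt x] by (simp add: M_def)
  qed
  obtain z where z: "z \<in> krylov A g k" "norm z = \<Delta>"
    and z_close: "norm (z - xopt) \<le> 2 * cheb_rate ((Max (eigvals A) + lopt) / (Min (eigvals A) + lopt)) ^ k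
                              * sqrt (\<Delta>\<^sup>2 + (norm (xopt - proj_upto k q xopt))\<^sup>2)"
    using exists_krylov_point_near_xopt[OF kkt easy xopt_norm] by blast
  have "(xk - xopt) \<bullet> M (xk - xopt) \<le> (z - xopt) \<bullet> M (z - xopt)"
    using trs_obj_energy[OF symmetric kkt xk_norm xopt_norm] trs_obj_energy[OF symmetric kkt z(2) xopt_norm]
      trs_obj_xk_le[OF z(1)] z(2)
    by (simp add: M_def)
  then have energy: "norm (M (xk - xopt)) \<le> onorm M * norm (z - xopt)"
    by (rule norm_le_onorm_of_energy_le[OF lin sym psd])
  have "M (xk - xopt) = (A *v xk + lk *\<^sub>R xk + g) + (lopt - lk) *\<^sub>R xk"
    using kkt by (simp add: M_def matrix_vector_mult_diff_distrib algebra_simps)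
  moreover have "(A *v xk + lk *\<^sub>R xk + g) \<bullet> ((lopt - lk) *\<^sub>R xk) = 0"
    using residual_orthogonal[OF xk_in_krylov] by (simp add: inner_commute)
  ultimately have "norm (A *v xk + lk *\<^sub>R xk + g) \<le> norm (M (xk - xopt))"
    using norm_add_Pythagorean[of "A *v xk + lk *\<^sub>R xk + g" "(lopt - lk) *\<^sub>R xk"]
    by (simp add: orthogonal_def real_le_rsqrt norm_eq_sqrt_inner)
  also have "\<dots> \<le> onorm M * norm (z - xopt)" by (rule energy)
  also have "\<dots> \<le> onorm M * (2 * cheb_rate ((Max (eigvals A) + lopt) / (Min (eigvals A) + lopt)) ^ k
                              * sqrt (\<Delta>\<^sup>2 + (norm (xopt - proj_upto k q xopt))\<^sup>2))"
    using z_close lin by (intro mult_left_mono onorm_pos_le) (simp_all add: linear_conv_bounded_linear)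
  finally show ?thesis unfolding M by (simp add: ac_simps)
qed

end

theorem corollary3p9:
  fixes A :: "real^'n^'n" and g :: "real^'n" and \<Delta> :: real
    and xopt :: "real^'n" and lopt :: real
    and k :: nat and q :: "nat \<Rightarrow> real^'n" and T :: "nat \<Rightarrow> nat \<Rightarrow> real" and \<beta> :: real
    and h :: "nat \<Rightarrow> real" and lk :: real and xk :: "real^'n"
  assumes symA: "transpose A = A"
    and g0: "g \<noteq> 0"
    and Dpos: "\<Delta> > 0"
    (* x_opt global minimiser of the TRS, with Lagrange multiplier lopt *)
    and xopt_feas: "norm xopt \<le> \<Delta>"
    and xopt_min: "\<forall>x. norm x \<le> \<Delta> \<longrightarrow> trs_obj A g xopt \<le> trs_obj A g x"
    and lopt_nonneg: "lopt \<ge> 0"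
    and kkt1: "A *v xopt + lopt *\<^sub>R xopt = - g"
    and kkt2: "lopt * (\<Delta> - norm xopt) = 0"
    and kkt3: "\<forall>v. 0 \<le> v \<bullet> (A *v v + lopt *\<^sub>R v)"
    (* easy case *)
    and easy: "lopt > - Min (eigvals A)"
    (* Lanczos process *)
    and k1: "k \<ge> 1"
    and q_orth: "\<forall>i\<in>{1..k}. \<forall>j\<in>{1..k}. q i \<bullet> q j = (if i = j then 1 else 0)"
    and q_1: "q 1 = (1 / norm g) *\<^sub>R g"
    and q_span: "\<forall>m\<in>{1..k}. span (q ` {1..m}) = krylov A g m"
    and T_def: "\<forall>i\<in>{1..k}. \<forall>j\<in>{1..k}. T i j = q i \<bullet> (A *v q j)"
    and beta_nonneg: "\<beta> \<ge> 0"
    and q_next: "norm (q (k+1)) = 1"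
    and lanczos_rel: "\<forall>j\<in>{1..k}. A *v q j
                         = (\<Sum>i=1..k. T i j *\<^sub>R q i) + (if j = k then \<beta> *\<^sub>R q (k+1) else 0)"
    (* GLTR iterate *)
    and h_feas: "vnorm k h \<le> \<Delta>"
    and h_min: "\<forall>h'. vnorm k h' \<le> \<Delta> \<longrightarrow> gltr_obj k T (norm g) h \<le> gltr_obj k T (norm g) h'"
    and lk_nonneg: "lk \<ge> 0"
    and h_kkt1: "\<forall>i\<in>{1..k}. (\<Sum>j=1..k. (T i j + (if i = j then lk else 0)) * h j)
                               = (if i = 1 then - norm g else 0)"
    and h_kkt2: "lk * (\<Delta> - vnorm k h) = 0"
    and h_kkt3: "\<forall>v. (\<exists>i\<in>{1..k}. v i \<noteq> 0) \<longrightarrow>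
                   0 < (\<Sum>i=1..k. \<Sum>j=1..k. v i * (T i j + (if i = j then lk else 0)) * v j)"
    and xk_def: "xk = (\<Sum>i=1..k. h i *\<^sub>R q i)"
    (* boundary solutions *)
    and xopt_bd: "norm xopt = \<Delta>"
    and xk_bd: "norm xk = \<Delta>"
  shows
    "let Aopt = A + lopt *\<^sub>R mat 1;
         \<kappa> = (Max (eigvals A) + lopt) / (Min (eigvals A) + lopt);
         \<kappa>k = cond2 k (\<lambda>i j. T i j + (if i = j then lk else 0));
         \<epsilon>k = norm (xopt - (\<Sum>i=1..k. (q i \<bullet> xopt) *\<^sub>R q i));
         B1 = onorm (\<lambda>x. Aopt *v x) * sqrt (\<Delta>^2 + \<epsilon>k^2)
              * ((sqrt \<kappa> - 1) / (sqrt \<kappa> + 1)) ^ k;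
         B2 = \<beta> * \<Delta> * ((sqrt \<kappa>k - 1) / (sqrt \<kappa>k + 1)) ^ (k - 1)
     in norm (A *v xk + lk *\<^sub>R xk + g) \<le> 2 * min B1 B2"
proof -
  interpret gltr A g k q T \<beta> \<Delta> h lk xk
    by (unfold_locales; use assms in \<open>(simp only: orthonormal_upto_def)?; blast\<close>)
  show ?thesis
    using residual_le_trs_bound[OF kkt1 easy xopt_bd] residual_le_lanczos_bound
    unfolding Let_def cheb_rate_def proj_upto_def by (simp add: min_def)
qed

end
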